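(* Let $\pi$ be a probability distribution (posterior) on the set of density matrices whose support contains at least one mixed (non-pure) state. Then no pure state is a Bayes estimator for infidelity loss under $\pi$; i.e., no pure state $\sigma$ minimizes the posterior Bayes risk $\int \bigl(1-\mathrm{Tr}\sqrt{\sqrt{\rho}\,\sigma\sqrt{\rho}}\bigr)\,d\pi(\rho)$ over density matrices $\sigma$.
   Context: Fix a finite-dimensional Hilbert space; a density matrix is a positive semidefinite operator of trace one; it is pure if it has rank one and mixed otherwise. The infidelity loss is $F(\rho,\sigma)=1-\mathrm{Tr}\sqrt{\sqrt{\rho}\,\sigma\sqrt{\rho}}$. For a distribution $\pi$ over states, the Bayes estimator for infidelity is a density matrix minimizing the expected loss $\int F(\rho,\sigma)\,d\pi(\rho)$ over $\sigma$. *)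

theory Defs
  imports "HOL-Analysis.Analysis" "HOL-Probability.Probability"
begin

definition adjoint_mat :: "complex^'n^'n \<Rightarrow> complex^'n^'n" where
  "adjoint_mat A = (\<chi> i j. cnj (A $ j $ i))"

definition cinner :: "complex^'n \<Rightarrow> complex^'n \<Rightarrow> complex" where
  "cinner x y = (\<Sum>i\<in>UNIV. cnj (x $ i) * y $ i)"

definition psd :: "complex^'n^'n \<Rightarrow> bool" where
  "psd A \<longleftrightarrow> adjoint_mat A = A \<and> (\<forall>x. 0 \<le> Re (cinner x (A *v x)))"

definition density_matrix :: "complex^'n^'n \<Rightarrow> bool" where
  "density_matrix \<rho> \<longleftrightarrow> psd \<rho> \<and> trace \<rho> = 1"

definition pure_state :: "complex^'n^'n \<Rightarrow> bool" where
  "pure_state \<rho> \<longleftrightarrow> density_matrix \<rho> \<and> rank \<rho> = 1"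

definition mixed_state :: "complex^'n^'n \<Rightarrow> bool" where
  "mixed_state \<rho> \<longleftrightarrow> density_matrix \<rho> \<and> rank \<rho> \<noteq> 1"

text \<open>The (unique) positive semidefinite square root of a psd matrix;
  set to 0 outside the psd cone (never used there).\<close>
definition msqrt :: "complex^'n^'n \<Rightarrow> complex^'n^'n" where
  "msqrt A = (if psd A then (THE B. psd B \<and> B ** B = A) else 0)"

text \<open>Infidelity loss F(rho,sigma) = 1 - Tr sqrt(sqrt rho sigma sqrt rho)
  (the trace is real; we take its real part).\<close>
definition infidelity :: "complex^'n^'n \<Rightarrow> complex^'n^'n \<Rightarrow> real" where
  "infidelity \<rho> \<sigma> = 1 - Re (trace (msqrt (msqrt \<rho> ** \<sigma> ** msqrt \<rho>)))"

definition bayes_risk :: "(complex^'n^'n) measure \<Rightarrow> complex^'n^'n \<Rightarrow> real" where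
  "bayes_risk M \<sigma> = (\<integral>\<rho>. infidelity \<rho> \<sigma> \<partial>M)"

definition bayes_estimator :: "(complex^'n^'n) measure \<Rightarrow> complex^'n^'n \<Rightarrow> bool" where
  "bayes_estimator M \<sigma> \<longleftrightarrow> density_matrix \<sigma> \<and>
     (\<forall>\<tau>. density_matrix \<tau> \<longrightarrow> bayes_risk M \<sigma> \<le> bayes_risk M \<tau>)"

definition measure_support :: "('a::topological_space) measure \<Rightarrow> 'a set" where
  "measure_support M = {x. \<forall>U. open U \<and> x \<in> U \<longrightarrow> emeasure M U > 0}"

end

theory Submission
  imports Defs
begin

text \<open>
  A pure estimate \<open>\<sigma> = |\<psi>\<rangle>\<langle>\<psi>|\<close> is improved by mixing in a little of a basis vector:
  for \<open>\<tau> = (1 - e) |\<psi>\<rangle>\<langle>\<psi>| + e |e\<^sub>i\<rangle>\<langle>e\<^sub>i|\<close>, the closed formula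
  \<open>Tr \<surd>(|a\<rangle>\<langle>a| + |b\<rangle>\<langle>b|) = \<surd>(|a|\<^sup>2 + |b|\<^sup>2 + 2 \<surd>(|a|\<^sup>2 |b|\<^sup>2 - |\<langle>a,b\<rangle>|\<^sup>2))\<close> for the
  fidelity with a state of rank two gives \<open>F(\<rho>,\<tau>) \<le> F(\<rho>,\<sigma>) + e - \<surd>(e s\<^sub>i(\<rho>))\<close>, where
  \<open>s\<^sub>i(\<rho>)\<close> is the \<open>i\<close>-th diagonal entry of the Schur complement
  \<open>\<rho> - |\<rho>\<psi>\<rangle>\<langle>\<rho>\<psi>| / \<langle>\<psi>,\<rho>\<psi>\<rangle>\<close>. Its trace \<open>1 - |\<rho>\<psi>|\<^sup>2 / \<langle>\<psi>,\<rho>\<psi>\<rangle>\<close> stays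
  bounded away from \<open>0\<close> near a mixed state, because there the largest eigenvalue is
  bounded away from \<open>1\<close>. As the support of the posterior contains a mixed state, some \<open>s\<^sub>i\<close>
  exceeds a constant \<open>c > 0\<close> on a set of positive measure \<open>m\<close>, and integrating shows that the
  risk of \<open>\<tau>\<close> is at most that of \<open>\<sigma>\<close> plus \<open>e - m \<surd>(e c)\<close>, which is negative for small \<open>e\<close>.
\<close>

section \<open>Sesquilinear form and outer products\<close>

definition outer :: "complex^'n \<Rightarrow> complex^'n \<Rightarrow> complex^'n^'n" where
  "outer u v = (\<chi> i j. u$i * cnj (v$j))"

lemma cinner_add_right: "cinner x (y + z) = cinner x y + cinner x z"
  by (simp add: cinner_def distrib_left sum.distrib)

lemma cinner_add_left: "cinner (x + y) z = cinner x z + cinner y z"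
  by (simp add: cinner_def distrib_right sum.distrib)

lemma cinner_diff_right: "cinner x (y - z) = cinner x y - cinner x z"
  by (simp add: cinner_def right_diff_distrib sum_subtractf)

lemma cinner_diff_left: "cinner (x - y) z = cinner x z - cinner y z"
  by (simp add: cinner_def left_diff_distrib sum_subtractf)

lemma cinner_scale_right: "cinner x (c *s y) = c * cinner x y"
  by (simp add: cinner_def sum_distrib_left algebra_simps)

lemma cinner_scale_left: "cinner (c *s x) y = cnj c * cinner x y"
  by (simp add: cinner_def sum_distrib_left algebra_simps)

lemma scaleR_vec_nth: "((c *\<^sub>R x)::complex^'n) $ i = of_real c * x $ i"
  by (subst vector_scaleR_component) (simp add: scaleR_conv_of_real)

lemma scaleR_mat_nth: "((c *\<^sub>R A)::complex^'n^'m) $ i $ j = of_real c * A $ i $ j"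
  by (subst vector_scaleR_component)+ (simp add: scaleR_conv_of_real)

lemma cinner_scaleR_right: "cinner x (c *\<^sub>R y) = of_real c * cinner x y"
  by (simp add: cinner_def sum_distrib_left algebra_simps scaleR_vec_nth del: vector_scaleR_component)

lemma cinner_scaleR_left: "cinner (c *\<^sub>R x) y = of_real c * cinner x y"
  by (simp add: cinner_def sum_distrib_left algebra_simps scaleR_vec_nth del: vector_scaleR_component)

lemma cinner_zero_right [simp]: "cinner x 0 = 0"
  by (simp add: cinner_def)

lemma cinner_zero_left [simp]: "cinner 0 x = 0"
  by (simp add: cinner_def)

lemma cinner_commute: "cinner y x = cnj (cinner x y)"
  by (simp add: cinner_def mult.commute)

lemma cinner_sum_right: "cinner x (sum f S) = (\<Sum>i\<in>S. cinner x (f i))"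
  unfolding cinner_def by (simp add: sum_distrib_left sum_component) (rule sum.swap)

lemma cinner_self: "cinner x x = of_real (\<Sum>i\<in>UNIV. (cmod (x$i))^2)"
  unfolding cinner_def of_real_sum
  by (rule sum.cong) (auto simp: mult.commute[of "cnj _"] complex_norm_square[symmetric])

lemma cinner_self_eq_norm: "cinner x x = of_real ((norm x)^2)"
  by (simp add: cinner_self norm_vec_def L2_set_def sum_nonneg)

lemma Re_cinner_self: "Re (cinner x x) = (norm x)^2"
  by (simp add: cinner_self_eq_norm)

lemma cinner_self_eq_0: "cinner x x = 0 \<longleftrightarrow> x = 0"
  by (simp add: cinner_self_eq_norm)

lemma inner_eq_Re_cinner: "(x::complex^'n) \<bullet> y = Re (cinner x y)"
  by (simp add: inner_vec_def cinner_def inner_complex_def)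

lemma cinner_axis_left: "cinner (axis k 1) y = y $ k"
proof -
  have "cinner (axis k 1) y = (\<Sum>i\<in>UNIV. if i = k then y $ i else 0)"
    unfolding cinner_def by (rule sum.cong) (auto simp: axis_def)
  then show ?thesis
    by simp
qed

lemma cinner_axis_right: "cinner y (axis k 1) = cnj (y $ k)"
  by (simp add: cinner_commute[of y] cinner_axis_left)

lemma norm_axis_one: "norm (axis k 1 :: complex^'n) = 1"
proof -
  have "(norm (axis k 1 :: complex^'n))^2 = 1"
    using Re_cinner_self[of "axis k 1 :: complex^'n"] by (simp add: cinner_axis_left)
  then show ?thesis
    using norm_ge_zero[of "axis k 1 :: complex^'n"] by (auto simp: power2_eq_1_iff)
qed

lemma mult_vec_axis_nth: "((A::'a::semiring_1^'n^'m) *v axis k 1) $ i = A $ i $ k"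
  unfolding matrix_vector_mult_def by (simp add: axis_def if_distrib cong: if_cong)

lemma cinner_axis_mult_vec_axis: "cinner (axis k 1) ((A::complex^'n^'n) *v axis k 1) = A $ k $ k"
  by (simp add: cinner_axis_left mult_vec_axis_nth)

lemma mult_cnj_eq_cmod_sq: "z * cnj z = of_real ((cmod z)^2)"
  by (metis complex_norm_square)

lemma norm_scale: "norm (c *s x) = cmod c * norm (x::complex^'n)"
proof -
  have "of_real ((norm (c *s x))^2) = cinner (c *s x) (c *s x)"
    by (simp add: cinner_self_eq_norm)
  also have "\<dots> = (c * cnj c) * cinner x x"
    by (simp add: cinner_scale_left cinner_scale_right algebra_simps)
  also have "\<dots> = of_real ((cmod c * norm x)^2)"
    by (simp add: mult_cnj_eq_cmod_sq cinner_self_eq_norm power_mult_distrib)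
  finally have "(norm (c *s x))^2 = (cmod c * norm x)^2"
    by (simp only: of_real_eq_iff)
  then show ?thesis
    by (simp add: power2_eq_iff_nonneg)
qed

definition gram_det :: "complex^'n \<Rightarrow> complex^'n \<Rightarrow> real" where
  "gram_det a b = (norm a)^2 * (norm b)^2 - (cmod (cinner a b))^2"

lemma norm_sub_projection_sq:
  fixes a b :: "complex^'n"
  assumes "a \<noteq> 0"
  shows "(norm (b - (cinner a b / cinner a a) *s a))^2 = gram_det a b / (norm a)^2"
proof -
  have aa: "cinner a a = of_real ((norm a)^2)" and bb: "cinner b b = of_real ((norm b)^2)"
    by (simp_all add: cinner_self_eq_norm)
  have "(norm a)^2 \<noteq> 0"
    using assms by simp
  then have "cinner (b - (cinner a b / cinner a a) *s a) (b - (cinner a b / cinner a a) *s a)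
      = of_real (gram_det a b / (norm a)^2)"
    by (simp add: gram_det_def cinner_diff_left cinner_diff_right cinner_scale_left cinner_scale_right
        aa bb cinner_commute[of b a] field_simps mult_cnj_eq_cmod_sq[symmetric] del: of_real_power)
  then show ?thesis
    by (metis Re_cinner_self Re_complex_of_real)
qed

lemma gram_det_nonneg: "0 \<le> gram_det a b"
proof (cases "a = 0")
  case True
  then show ?thesis
    by (simp add: gram_det_def)
next
  case False
  have "0 \<le> gram_det a b / (norm a)^2"
    unfolding norm_sub_projection_sq[OF False, symmetric] by simp
  then show ?thesis
    using False by (simp add: zero_le_divide_iff)
qed

lemma cinner_cauchy_schwarz: "(cmod (cinner a b))^2 \<le> (norm a)^2 * (norm b)^2"
  using gram_det_nonneg[of a b] by (simp add: gram_det_def)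

lemma cinner_mult_vec_right: "cinner x (A *v y) = cinner (adjoint_mat A *v x) y"
  unfolding cinner_def adjoint_mat_def matrix_vector_mult_def
  by (simp add: sum_distrib_left sum_distrib_right cnj_sum mult.assoc mult.left_commute)
     (rule sum.swap)

lemma cinner_hermitian: "adjoint_mat A = A \<Longrightarrow> cinner x (A *v y) = cinner (A *v x) y"
  by (metis cinner_mult_vec_right)

lemma cinner_hermitian_real:
  assumes "adjoint_mat A = A"
  shows "cinner x (A *v x) = of_real (Re (cinner x (A *v x)))"
proof -
  have "cnj (cinner x (A *v x)) = cinner x (A *v x)"
    by (metis assms cinner_commute cinner_hermitian)
  then show ?thesis
    by (metis Reals_cnj_iff of_real_Re)
qed

lemma adjoint_add: "adjoint_mat (A + B) = adjoint_mat A + adjoint_mat B"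
  by (simp add: adjoint_mat_def vec_eq_iff)

lemma adjoint_diff: "adjoint_mat (A - B) = adjoint_mat A - adjoint_mat B"
  by (simp add: adjoint_mat_def vec_eq_iff)

lemma adjoint_scaleR: "adjoint_mat (c *\<^sub>R A) = c *\<^sub>R adjoint_mat A"
  by (simp add: adjoint_mat_def vec_eq_iff scaleR_mat_nth del: vector_scaleR_component)

lemma adjoint_sum: "adjoint_mat (sum f S) = (\<Sum>i\<in>S. adjoint_mat (f i))"
  by (induction S rule: infinite_finite_induct) (auto simp: adjoint_add adjoint_mat_def vec_eq_iff)

lemma mult_vec_scaleR: "(A::complex^'n^'n) *v (c *\<^sub>R x) = c *\<^sub>R (A *v x)"
  by (simp add: matrix_vector_mult_def vec_eq_iff sum_distrib_left algebra_simps scaleR_vec_nth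
      scaleR_mat_nth del: vector_scaleR_component)

lemma scaleR_mult_vec: "((c *\<^sub>R A)::complex^'n^'n) *v x = c *\<^sub>R (A *v x)"
  by (simp add: matrix_vector_mult_def vec_eq_iff sum_distrib_left algebra_simps scaleR_vec_nth
      scaleR_mat_nth del: vector_scaleR_component)

lemma sum_mult_vec: "(sum f S :: 'a::semiring_1^'n^'m) *v x = (\<Sum>i\<in>S. f i *v x)"
  by (induction S rule: infinite_finite_induct) (auto simp: matrix_vector_mult_add_rdistrib)

lemma mult_vec_sum: "(A::'a::semiring_1^'n^'m) *v (sum f S) = (\<Sum>i\<in>S. A *v f i)"
  by (induction S rule: infinite_finite_induct) (auto simp: matrix_vector_right_distrib)

lemma scaleR_matrix_mult_left:
  fixes A B :: "complex^'n^'n"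
  shows "(c *\<^sub>R A) ** B = c *\<^sub>R (A ** B)"
  by (rule matrix_eq[THEN iffD2], intro allI)
     (simp add: matrix_vector_mul_assoc[symmetric] scaleR_mult_vec)

lemma scaleR_matrix_mult_right:
  fixes A B :: "complex^'n^'n"
  shows "A ** (c *\<^sub>R B) = c *\<^sub>R (A ** B)"
  by (rule matrix_eq[THEN iffD2], intro allI)
     (simp add: matrix_vector_mul_assoc[symmetric] scaleR_mult_vec mult_vec_scaleR)

lemma matrix_add_rdistrib: "(B + C) ** (A::'a::semiring_1^'n^'m) = B ** A + C ** A"
  by (simp add: matrix_matrix_mult_def vec_eq_iff distrib_right sum.distrib)

lemma trace_scaleR: "trace (c *\<^sub>R (A::complex^'n^'n)) = of_real c * trace A"
  by (simp add: trace_def scaleR_mat_nth sum_distrib_left del: vector_scaleR_component)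

lemma outer_mult_vec: "outer u v *v x = cinner v x *s u"
  by (simp add: outer_def matrix_vector_mult_def cinner_def vec_eq_iff sum_distrib_left
      mult.assoc mult.commute mult.left_commute)

lemma cinner_outer_self: "cinner x (outer w w *v x) = of_real ((cmod (cinner w x))^2)"
  by (simp add: outer_mult_vec cinner_scale_right cinner_commute[of x w] mult.commute
      mult_cnj_eq_cmod_sq)

lemma trace_outer: "trace (outer u v) = cinner v u"
  by (simp add: trace_def outer_def cinner_def mult.commute)

lemma adjoint_outer: "adjoint_mat (outer u v) = outer v u"
  by (simp add: adjoint_mat_def outer_def vec_eq_iff mult.commute)

lemma outer_zero_left [simp]: "outer 0 v = 0"
  by (simp add: outer_def vec_eq_iff)

lemma outer_mult_outer: "outer u v ** outer w z = outer (cinner v w *s u) z"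
  by (simp add: matrix_eq matrix_vector_mul_assoc[symmetric] outer_mult_vec cinner_scale_right
      vec_eq_iff algebra_simps)

lemma matrix_mult_outer: "(M::complex^'n^'n) ** outer u v = outer (M *v u) v"
  by (simp add: outer_def matrix_matrix_mult_def matrix_vector_mult_def vec_eq_iff
      sum_distrib_right mult.assoc)

lemma outer_matrix_mult: "outer u v ** (M::complex^'n^'n) = outer u (adjoint_mat M *v v)"
  by (simp add: outer_def matrix_matrix_mult_def matrix_vector_mult_def adjoint_mat_def vec_eq_iff
      sum_distrib_left cnj_sum algebra_simps)

lemma outer_of_real_scale_left: "outer (of_real c *s u) v = c *\<^sub>R outer u v"
  by (simp add: outer_def vec_eq_iff scaleR_mat_nth del: vector_scaleR_component)

lemma outer_scaleR_self: "outer (c *\<^sub>R a) (c *\<^sub>R a) = (c^2) *\<^sub>R outer a a"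
  by (simp add: outer_def vec_eq_iff scaleR_vec_nth scaleR_mat_nth power2_eq_square
      del: vector_scaleR_component)

lemma outer_scale_self: "outer (c *s a) (c *s a) = ((cmod c)^2) *\<^sub>R outer a a"
  by (simp add: outer_def vec_eq_iff scaleR_mat_nth mult_cnj_eq_cmod_sq[symmetric] algebra_simps
      del: vector_scaleR_component of_real_power)

section \<open>Spectral theorem for Hermitian matrices\<close>

text \<open>Real orthogonality to both \<open>e\<close> and \<open>\<i> e\<close> is orthogonality with respect to \<open>cinner\<close>;
  the real dimension \<open>2 n\<close> leaves room for such a vector.\<close>

lemma exists_nonzero_orthogonal:
  fixes E :: "(complex^'n) set"
  assumes "finite E" and "card E < CARD('n)"
  obtains x where "x \<noteq> 0" and "\<And>e. e \<in> E \<Longrightarrow> cinner e x = 0"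
proof -
  define F where "F = E \<union> (\<lambda>e. \<i> *s e) ` E"
  have "dim F \<le> card F"
    using assms(1) by (simp add: F_def dim_le_card')
  also have "\<dots> \<le> card E + card ((\<lambda>e. \<i> *s e) ` E)"
    unfolding F_def by (rule card_Un_le)
  also have "\<dots> \<le> 2 * card E"
    using card_image_le[OF assms(1)] by simp
  finally have "dim F < DIM(complex^'n)"
    using assms(2) by simp
  then obtain x :: "complex^'n" where "x \<noteq> 0" and orth: "\<And>y. y \<in> span F \<Longrightarrow> orthogonal x y"
    using orthogonal_to_subspace_exists by blast
  moreover have "cinner e x = 0" if "e \<in> E" for e
  proof -
    have "e \<in> span F" "\<i> *s e \<in> span F"
      using that by (auto simp: F_def intro: span_base)
    then have "orthogonal x e" "orthogonal x (\<i> *s e)"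
      using orth by auto
    then have "Re (cinner e x) = 0" "Re (cinner (\<i> *s e) x) = 0"
      by (simp_all add: orthogonal_def inner_eq_Re_cinner cinner_commute[of x])
    then show ?thesis
      by (simp add: cinner_scale_left complex_eq_iff)
  qed
  ultimately show ?thesis
    using that by blast
qed

lemma quadratic_form_max_on_subspace:
  fixes A :: "complex^'n^'n"
  assumes "subspace V" and "V \<noteq> {0}"
  shows "\<exists>x\<in>V. norm x = 1 \<and> (\<forall>y\<in>V. Re (cinner y (A *v y)) \<le> Re (cinner x (A *v x)) * (norm y)^2)"
proof -
  define q where "q y = Re (cinner y (A *v y))" for y
  have "continuous_on UNIV q"
    unfolding q_def cinner_def matrix_vector_mult_def vec_lambda_beta by (intro continuous_intros)
  moreover have "compact (V \<inter> sphere 0 1)"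
    using assms(1) by (simp add: closed_subspace closed_Int_compact)
  moreover have "V \<inter> sphere 0 1 \<noteq> {}"
  proof -
    obtain v where "v \<in> V" "v \<noteq> 0"
      using assms subspace_0 by blast
    then have "(1 / norm v) *\<^sub>R v \<in> V \<inter> sphere 0 1"
      using assms(1) by (simp add: subspace_scale)
    then show ?thesis
      by blast
  qed
  ultimately obtain x where x: "x \<in> V \<inter> sphere 0 1" and max: "\<And>y. y \<in> V \<inter> sphere 0 1 \<Longrightarrow> q y \<le> q x"
    using continuous_attains_sup[of "V \<inter> sphere 0 1" q] continuous_on_subset by blast
  have "q y \<le> q x * (norm y)^2" if "y \<in> V" for y
  proof (cases "y = 0")
    case True
    then show ?thesis
      by (simp add: q_def)
  next
    case False
    then have "(1 / norm y) *\<^sub>R y \<in> V \<inter> sphere 0 1"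
      using assms(1) that by (simp add: subspace_scale)
    then have "q ((1 / norm y) *\<^sub>R y) \<le> q x"
      by (rule max)
    moreover have "q ((1 / norm y) *\<^sub>R y) = q y / (norm y)^2"
      by (simp add: q_def mult_vec_scaleR cinner_scaleR_left cinner_scaleR_right power2_eq_square)
    ultimately show ?thesis
      using False by (simp add: divide_le_eq)
  qed
  with x show ?thesis
    by (auto simp: q_def)
qed

lemma nonpos_if_le_mult_all_pos:
  fixes a k :: real
  assumes "\<And>t. 0 < t \<Longrightarrow> a \<le> t * k"
  shows "a \<le> 0"
proof (rule ccontr)
  assume "\<not> a \<le> 0"
  define t where "t = a / (\<bar>k\<bar> + 1)"
  have "0 < t"
    using \<open>\<not> a \<le> 0\<close> by (simp add: t_def)
  have "t * k \<le> t * \<bar>k\<bar>"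
    using \<open>0 < t\<close> by (simp add: mult_left_mono)
  also have "\<dots> < a"
    using \<open>\<not> a \<le> 0\<close> by (simp add: t_def field_simps)
  finally show False
    using assms[OF \<open>0 < t\<close>] by simp
qed

lemma rayleigh_residual_expansion:
  fixes A :: "complex^'n^'n"
  assumes herm: "adjoint_mat A = A" and x: "norm x = 1"
  defines "l \<equiv> Re (cinner x (A *v x))"
  defines "w \<equiv> A *v x - l *\<^sub>R x"
  shows "Re (cinner (x + t *\<^sub>R w) (A *v (x + t *\<^sub>R w)))
      = l + 2 * t * (norm w)^2 + t^2 * Re (cinner w (A *v w))"
    and "(norm (x + t *\<^sub>R w))^2 = 1 + t^2 * (norm w)^2"
proof -
  have xx: "cinner x x = 1"
    using x by (simp add: cinner_self_eq_norm)
  have xAx: "cinner x (A *v x) = of_real l"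
    unfolding l_def by (rule cinner_hermitian_real[OF herm])
  have Ax: "A *v x = w + l *\<^sub>R x"
    by (simp add: w_def)
  have xw: "cinner x w = 0"
    by (simp add: w_def cinner_diff_right cinner_scaleR_right xAx xx)
  then have wx: "cinner w x = 0"
    by (metis cinner_commute complex_cnj_zero)
  have ww: "cinner w w = of_real ((norm w)^2)"
    by (simp add: cinner_self_eq_norm)
  define b where "b = Re (cinner w (A *v w))"
  have wAw: "cinner w (A *v w) = of_real b"
    unfolding b_def by (rule cinner_hermitian_real[OF herm])
  have wAx: "cinner w (A *v x) = of_real ((norm w)^2)"
    by (simp add: Ax cinner_add_right cinner_scaleR_right ww wx)
  have xAw: "cinner x (A *v w) = of_real ((norm w)^2)"
    by (simp add: cinner_hermitian[OF herm] Ax cinner_add_left cinner_scaleR_left ww xw)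
  have "cinner (x + t *\<^sub>R w) (A *v (x + t *\<^sub>R w)) = of_real (l + 2 * t * (norm w)^2 + t^2 * b)"
    by (simp add: matrix_vector_right_distrib mult_vec_scaleR cinner_add_left cinner_add_right
        cinner_scaleR_left cinner_scaleR_right xAx wAx xAw wAw power2_eq_square algebra_simps)
  then show "Re (cinner (x + t *\<^sub>R w) (A *v (x + t *\<^sub>R w)))
      = l + 2 * t * (norm w)^2 + t^2 * Re (cinner w (A *v w))"
    by (simp add: b_def)
  show "(norm (x + t *\<^sub>R w))^2 = 1 + t^2 * (norm w)^2"
    using Re_cinner_self[of "x + t *\<^sub>R w"]
    by (simp add: cinner_add_left cinner_add_right cinner_scaleR_left cinner_scaleR_right
        xx xw wx ww power2_eq_square)
qed

text \<open>A maximiser of the Rayleigh quotient is an eigenvector: otherwise moving it a little in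
  the direction of the residual \<open>w = A x - l x\<close> would increase the quotient.\<close>

lemma rayleigh_maximiser_eigenvector:
  fixes A :: "complex^'n^'n"
  assumes herm: "adjoint_mat A = A" and V: "subspace V" and x: "x \<in> V" "A *v x \<in> V" "norm x = 1"
    and max: "\<forall>y\<in>V. Re (cinner y (A *v y)) \<le> Re (cinner x (A *v x)) * (norm y)^2"
  shows "A *v x = Re (cinner x (A *v x)) *\<^sub>R x"
proof -
  define l where "l = Re (cinner x (A *v x))"
  define w where "w = A *v x - l *\<^sub>R x"
  define a b where "a = (norm w)^2" and "b = Re (cinner w (A *v w))"
  have "2 * a \<le> t * (l * a - b)" if "t > 0" for t
  proof -
    have "x + t *\<^sub>R w \<in> V"
      using V x by (simp add: w_def subspace_add subspace_diff subspace_scale)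
    then have "Re (cinner (x + t *\<^sub>R w) (A *v (x + t *\<^sub>R w))) \<le> l * (norm (x + t *\<^sub>R w))^2"
      using max unfolding l_def by blast
    then have "t * (2 * a) \<le> t * (t * (l * a - b))"
      using rayleigh_residual_expansion[OF herm x(3), of t]
      by (simp add: l_def[symmetric] w_def[symmetric] a_def b_def algebra_simps power2_eq_square)
    then show ?thesis
      using that by simp
  qed
  then have "2 * a \<le> 0"
    by (rule nonpos_if_le_mult_all_pos)
  then show ?thesis
    by (simp add: a_def w_def l_def)
qed

lemma hermitian_eigenvector_orthogonal:
  fixes A :: "complex^'n^'n"
  assumes herm: "adjoint_mat A = A" and E: "finite E" "card E < CARD('n)"
    and eig: "\<forall>e\<in>E. \<exists>l. A *v e = l *\<^sub>R e"
  obtains x l where "norm x = 1" and "A *v x = l *\<^sub>R x" and "\<forall>e\<in>E. cinner e x = 0"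
proof -
  define V where "V = {x. \<forall>e\<in>E. cinner e x = 0}"
  have V: "subspace V"
    by (auto simp: V_def subspace_def cinner_add_right cinner_scaleR_right)
  obtain y where "y \<noteq> 0" "\<And>e. e \<in> E \<Longrightarrow> cinner e y = 0"
    using exists_nonzero_orthogonal[OF E] by auto
  then have "V \<noteq> {0}"
    by (auto simp: V_def)
  then obtain x where x: "x \<in> V" "norm x = 1"
    and max: "\<forall>y\<in>V. Re (cinner y (A *v y)) \<le> Re (cinner x (A *v x)) * (norm y)^2"
    using quadratic_form_max_on_subspace[OF V, where A = A] by blast
  have "cinner e (A *v x) = 0" if "e \<in> E" for e
  proof -
    obtain l where "A *v e = l *\<^sub>R e"
      using eig \<open>e \<in> E\<close> by blast
    then have "cinner e (A *v x) = of_real l * cinner e x"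
      by (simp add: cinner_hermitian[OF herm] cinner_scaleR_left)
    then show ?thesis
      using x(1) \<open>e \<in> E\<close> by (simp add: V_def)
  qed
  then have "A *v x \<in> V"
    by (simp add: V_def)
  then have "A *v x = Re (cinner x (A *v x)) *\<^sub>R x"
    by (rule rayleigh_maximiser_eigenvector[OF herm V x(1) _ x(2) max])
  with x show ?thesis
    using that by (auto simp: V_def)
qed

lemma hermitian_orthonormal_eigenvectors:
  fixes A :: "complex^'n^'n"
  assumes herm: "adjoint_mat A = A"
  shows "k \<le> CARD('n) \<Longrightarrow> \<exists>E. finite E \<and> card E = k \<and>
     (\<forall>e\<in>E. cinner e e = 1 \<and> (\<exists>l. A *v e = l *\<^sub>R e)) \<and>
     (\<forall>e\<in>E. \<forall>f\<in>E. e \<noteq> f \<longrightarrow> cinner e f = 0)"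
proof (induction k)
  case 0
  show ?case
    by (intro exI[of _ "{}"]) simp
next
  case (Suc k)
  then obtain E where E: "finite E" "card E = k"
    and eig: "\<forall>e\<in>E. cinner e e = 1 \<and> (\<exists>l. A *v e = l *\<^sub>R e)"
    and orth: "\<forall>e\<in>E. \<forall>f\<in>E. e \<noteq> f \<longrightarrow> cinner e f = 0"
    by auto
  have "card E < CARD('n)"
    using E(2) Suc.prems by simp
  moreover have "\<forall>e\<in>E. \<exists>l. A *v e = l *\<^sub>R e"
    using eig by blast
  ultimately obtain x l where x: "norm x = 1" "A *v x = l *\<^sub>R x" and xE: "\<forall>e\<in>E. cinner e x = 0"
    by (rule hermitian_eigenvector_orthogonal[OF herm E(1)])
  have xx: "cinner x x = 1"
    using x(1) by (simp add: cinner_self_eq_norm)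
  have "\<forall>e\<in>E. cinner x e = 0"
    using xE by (metis cinner_commute complex_cnj_zero)
  have "x \<notin> E"
    using xE xx by force
  show ?case
  proof (intro exI conjI)
    show "finite (insert x E)" "card (insert x E) = Suc k"
      using E \<open>x \<notin> E\<close> by simp_all
    show "\<forall>e\<in>insert x E. cinner e e = 1 \<and> (\<exists>l. A *v e = l *\<^sub>R e)"
      using eig xx x(2) by auto
    show "\<forall>e\<in>insert x E. \<forall>f\<in>insert x E. e \<noteq> f \<longrightarrow> cinner e f = 0"
      using orth xE \<open>\<forall>e\<in>E. cinner x e = 0\<close> by auto
  qed
qed

lemma hermitian_spectral:
  fixes A :: "complex^'n^'n"
  assumes "adjoint_mat A = A"
  obtains u :: "'n \<Rightarrow> complex^'n" and d :: "'n \<Rightarrow> real"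
  where "\<And>i j. cinner (u i) (u j) = (if i = j then 1 else 0)" and "\<And>i. A *v u i = d i *\<^sub>R u i"
proof -
  obtain E where E: "finite E" "card E = CARD('n)"
    and eig: "\<forall>e\<in>E. cinner e e = 1 \<and> (\<exists>l. A *v e = l *\<^sub>R e)"
    and orth: "\<forall>e\<in>E. \<forall>f\<in>E. e \<noteq> f \<longrightarrow> cinner e f = 0"
    using hermitian_orthonormal_eigenvectors[OF assms, of "CARD('n)"] by auto
  obtain u where u: "bij_betw u (UNIV::'n set) E"
    using finite_same_card_bij[OF finite E(1)] E(2) by auto
  then have uE: "u i \<in> E" and u_inj: "u i = u j \<Longrightarrow> i = j" for i j
    by (auto simp: bij_betw_def inj_def)
  have "\<forall>i. \<exists>l. A *v u i = l *\<^sub>R u i"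
    using eig uE by blast
  then obtain d where "\<And>i. A *v u i = d i *\<^sub>R u i"
    by metis
  moreover have "cinner (u i) (u j) = (if i = j then 1 else 0)" for i j
    using eig orth uE u_inj[of i j] by auto
  ultimately show ?thesis
    using that by blast
qed

lemma orthonormal_expansion:
  fixes u :: "'n \<Rightarrow> complex^'n"
  assumes "\<And>i j. cinner (u i) (u j) = (if i = j then 1 else 0)"
  shows "x = (\<Sum>i\<in>UNIV. cinner (u i) x *s u i)"
proof -
  define U :: "complex^'n^'n" where "U = (\<chi> r c. u c $ r)"
  have "adjoint_mat U ** U = mat 1"
    using assms by (simp add: adjoint_mat_def U_def matrix_matrix_mult_def mat_def vec_eq_iff cinner_def)
  then have "U ** adjoint_mat U = mat 1"
    by (simp add: matrix_left_right_inverse)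
  then have "x = U *v (adjoint_mat U *v x)"
    by (simp add: matrix_vector_mul_assoc)
  also have "\<dots> = (\<Sum>i\<in>UNIV. cinner (u i) x *s u i)"
    by (simp add: U_def adjoint_mat_def matrix_vector_mult_def vec_eq_iff cinner_def sum_component
        mult.commute)
  finally show ?thesis .
qed

lemma matrix_eq_on_orthonormal_basis:
  fixes M N :: "complex^'n^'n" and u :: "'n \<Rightarrow> complex^'n"
  assumes "\<And>i j. cinner (u i) (u j) = (if i = j then 1 else 0)" and "\<And>j. M *v u j = N *v u j"
  shows "M = N"
proof -
  have "M *v x = N *v x" for x
    by (subst (1 2) orthonormal_expansion[OF assms(1), of x])
       (simp add: mult_vec_sum vector_scalar_commute assms(2))
  then show ?thesis
    by (simp add: matrix_eq)
qed

section \<open>Positive semidefinite matrices and their square roots\<close>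

lemma psd_hermitian: "psd A \<Longrightarrow> adjoint_mat A = A"
  by (simp add: psd_def)

lemma psd_quadratic_nonneg: "psd A \<Longrightarrow> 0 \<le> Re (cinner x (A *v x))"
  by (simp add: psd_def)

lemma psd_zero: "psd (0::complex^'n^'n)"
  by (simp add: psd_def adjoint_mat_def vec_eq_iff)

lemma psd_outer_self: "psd (outer w w)"
  by (simp add: psd_def adjoint_outer cinner_outer_self)

lemma psd_scaleR: "psd A \<Longrightarrow> 0 \<le> c \<Longrightarrow> psd (c *\<^sub>R A)"
  by (simp add: psd_def adjoint_scaleR scaleR_mult_vec cinner_scaleR_right)

lemma psd_add: "psd A \<Longrightarrow> psd B \<Longrightarrow> psd (A + B)"
  by (simp add: psd_def adjoint_add matrix_vector_mult_add_rdistrib cinner_add_right)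

lemma psd_sqrt_exists:
  fixes A :: "complex^'n^'n"
  assumes "psd A"
  obtains S where "psd S" and "S ** S = A"
proof -
  obtain u :: "'n \<Rightarrow> complex^'n" and d :: "'n \<Rightarrow> real"
    where on: "\<And>i j. cinner (u i) (u j) = (if i = j then 1 else 0)"
      and eig: "\<And>i. A *v u i = d i *\<^sub>R u i"
    using hermitian_spectral[OF psd_hermitian[OF assms]] by blast
  have d: "0 \<le> d i" for i
    using psd_quadratic_nonneg[OF assms, of "u i"] by (simp add: eig cinner_scaleR_right on)
  define S where "S = (\<Sum>i\<in>UNIV. sqrt (d i) *\<^sub>R outer (u i) (u i))"
  have Su: "S *v u j = sqrt (d j) *\<^sub>R u j" for j
  proof -
    have "S *v u j = (\<Sum>i\<in>UNIV. sqrt (d i) *\<^sub>R (cinner (u i) (u j) *s u i))"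
      by (simp add: S_def sum_mult_vec scaleR_mult_vec outer_mult_vec)
    also have "\<dots> = (\<Sum>i\<in>UNIV. if i = j then sqrt (d j) *\<^sub>R u j else 0)"
      by (rule sum.cong) (auto simp: on)
    finally show ?thesis
      by simp
  qed
  have "S ** S = A"
    by (rule matrix_eq_on_orthonormal_basis[OF on])
       (simp add: matrix_vector_mul_assoc[symmetric] Su mult_vec_scaleR eig d)
  moreover have "psd S"
  proof -
    have "adjoint_mat S = S"
      by (simp add: S_def adjoint_sum adjoint_scaleR adjoint_outer)
    moreover have "cinner x (S *v x) = of_real (\<Sum>i\<in>UNIV. sqrt (d i) * (cmod (cinner (u i) x))^2)" for x
      by (simp add: S_def sum_mult_vec scaleR_mult_vec cinner_sum_right cinner_scaleR_right
          cinner_outer_self)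
    ultimately show ?thesis
      using d by (simp add: psd_def sum_nonneg)
  qed
  ultimately show ?thesis
    using that by blast
qed

lemma psd_sqrt_eigenvector:
  fixes T :: "complex^'n^'n"
  assumes T: "psd T" and eig: "T *v (T *v v) = m *\<^sub>R v" and m: "0 \<le> m"
  shows "T *v v = sqrt m *\<^sub>R v"
proof (cases "m = 0")
  case True
  have "cinner (T *v v) (T *v v) = cinner v (T *v (T *v v))"
    by (simp add: cinner_hermitian[OF psd_hermitian[OF T]])
  then show ?thesis
    using True eig by (simp add: cinner_self_eq_0)
next
  case False
  define g where "g = T *v v - sqrt m *\<^sub>R v"
  have "T *v g = (- sqrt m) *\<^sub>R g"
    using m by (simp add: g_def matrix_vector_mult_diff_distrib mult_vec_scaleR eig algebra_simps)
  then have "Re (cinner g (T *v g)) = - sqrt m * (norm g)^2"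
    by (simp add: cinner_scaleR_right Re_cinner_self del: scaleR_minus_left)
  moreover have "sqrt m > 0"
    using m False by simp
  ultimately have "g = 0"
    using psd_quadratic_nonneg[OF T, of g] by (simp add: mult_le_0_iff)
  then show ?thesis
    by (simp add: g_def)
qed

lemma psd_sqrt_unique:
  fixes A S T :: "complex^'n^'n"
  assumes "psd A" and S: "psd S" "S ** S = A" and T: "psd T" "T ** T = A"
  shows "S = T"
proof -
  obtain u :: "'n \<Rightarrow> complex^'n" and d :: "'n \<Rightarrow> real"
    where on: "\<And>i j. cinner (u i) (u j) = (if i = j then 1 else 0)"
      and eig: "\<And>i. A *v u i = d i *\<^sub>R u i"
    using hermitian_spectral[OF psd_hermitian[OF assms(1)]] by blast
  have d: "0 \<le> d i" for i
    using psd_quadratic_nonneg[OF assms(1), of "u i"] by (simp add: eig cinner_scaleR_right on)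
  show ?thesis
  proof (rule matrix_eq_on_orthonormal_basis[OF on])
    fix j
    have "S *v u j = sqrt (d j) *\<^sub>R u j"
      using S by (intro psd_sqrt_eigenvector d) (simp_all add: matrix_vector_mul_assoc eig)
    moreover have "T *v u j = sqrt (d j) *\<^sub>R u j"
      using T by (intro psd_sqrt_eigenvector d) (simp_all add: matrix_vector_mul_assoc eig)
    ultimately show "S *v u j = T *v u j"
      by simp
  qed
qed

lemma psd_msqrt:
  fixes A :: "complex^'n^'n"
  assumes "psd A"
  shows "psd (msqrt A)" and "msqrt A ** msqrt A = A"
proof -
  have "\<exists>!S. psd S \<and> S ** S = A"
    using psd_sqrt_exists[OF assms] psd_sqrt_unique[OF assms] by metis
  from theI'[OF this] have "psd (msqrt A) \<and> msqrt A ** msqrt A = A"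
    unfolding msqrt_def using assms by simp
  then show "psd (msqrt A)" and "msqrt A ** msqrt A = A"
    by auto
qed

lemma msqrt_eqI:
  fixes A S :: "complex^'n^'n"
  assumes "psd A" and "psd S" and "S ** S = A"
  shows "msqrt A = S"
  using psd_sqrt_unique[OF assms(1) psd_msqrt[OF assms(1)] assms(2,3)] .

lemma cinner_msqrt:
  assumes "psd \<rho>"
  shows "cinner (msqrt \<rho> *v x) (msqrt \<rho> *v y) = cinner x (\<rho> *v y)"
  by (simp add: cinner_hermitian[OF psd_hermitian[OF psd_msqrt(1)[OF assms]], symmetric]
      matrix_vector_mul_assoc psd_msqrt(2)[OF assms])

lemma psd_cauchy_schwarz:
  assumes "psd \<rho>"
  shows "(cmod (cinner x (\<rho> *v y)))^2 \<le> Re (cinner x (\<rho> *v x)) * Re (cinner y (\<rho> *v y))"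
  using cinner_cauchy_schwarz[of "msqrt \<rho> *v x" "msqrt \<rho> *v y"]
  by (simp add: cinner_msqrt[OF assms] Re_cinner_self[symmetric])

lemma psd_norm_mult_vec_sq_le:
  fixes \<rho> :: "complex^'n^'n"
  assumes "psd \<rho>" and "\<And>x. Re (cinner x (\<rho> *v x)) \<le> L * (norm x)^2"
  shows "(norm (\<rho> *v \<psi>))^2 \<le> L * Re (cinner \<psi> (\<rho> *v \<psi>))"
proof -
  define a where "a = msqrt \<rho> *v \<psi>"
  have "\<rho> *v \<psi> = msqrt \<rho> *v a"
    by (simp add: a_def matrix_vector_mul_assoc psd_msqrt(2)[OF assms(1)])
  then have "(norm (\<rho> *v \<psi>))^2 = Re (cinner a (\<rho> *v a))"
    by (simp add: Re_cinner_self[symmetric] cinner_msqrt[OF assms(1)])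
  also have "\<dots> \<le> L * (norm a)^2"
    by (rule assms(2))
  also have "(norm a)^2 = Re (cinner \<psi> (\<rho> *v \<psi>))"
    by (simp add: a_def Re_cinner_self[symmetric] cinner_msqrt[OF assms(1)])
  finally show ?thesis .
qed

lemma msqrt_zero: "msqrt (0::complex^'n^'n) = 0"
  by (rule msqrt_eqI[OF psd_zero psd_zero]) simp

lemma msqrt_outer_self: "msqrt (outer w w) = (1 / norm w) *\<^sub>R outer w w"
proof (cases "w = 0")
  case True
  then show ?thesis
    by (simp add: msqrt_zero)
next
  case False
  have "outer w w ** outer w w = (norm w)^2 *\<^sub>R outer w w"
    by (simp only: outer_mult_outer cinner_self_eq_norm outer_of_real_scale_left)
  then show ?thesis
    using False
    by (intro msqrt_eqI psd_outer_self psd_scaleR)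
       (simp_all add: scaleR_matrix_mult_left scaleR_matrix_mult_right power2_eq_square)
qed

lemma Re_trace_msqrt_outer_self: "Re (trace (msqrt (outer w w))) = norm w"
proof (cases "w = 0")
  case True
  then show ?thesis
    by (simp add: msqrt_zero trace_def)
next
  case False
  then show ?thesis
    by (simp add: msqrt_outer_self trace_scaleR trace_outer cinner_self_eq_norm power2_eq_square)
qed

lemma psd_diag:
  assumes "psd A"
  shows "A $ k $ k = of_real (Re (A $ k $ k))" and "0 \<le> Re (A $ k $ k)"
  using cinner_hermitian_real[OF psd_hermitian[OF assms], of "axis k 1"]
    psd_quadratic_nonneg[OF assms, of "axis k 1"]
  by (simp_all add: cinner_axis_mult_vec_axis)

lemma psd_Re_trace_nonneg: "psd A \<Longrightarrow> 0 \<le> Re (trace A)"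
  by (simp add: trace_def sum_nonneg psd_diag(2))

lemma psd_eq_0_if_diag_eq_0:
  fixes M :: "complex^'n^'n"
  assumes M: "psd M" and diag: "\<And>i. M $ i $ i = 0"
  shows "M = 0"
proof -
  have "M $ i $ j = 0" for i j
  proof -
    define m where "m = M $ i $ j"
    define x where "x = axis i 1 - cnj m *s axis j 1"
    have "M $ j $ i = cnj m"
      using psd_hermitian[OF M] by (auto simp: m_def adjoint_mat_def vec_eq_iff)
    then have "cinner x (M *v x) = - 2 * (m * cnj m)"
      unfolding x_def
      by (simp add: matrix_vector_mult_diff_distrib vector_scalar_commute cinner_diff_left
          cinner_diff_right cinner_scale_left cinner_scale_right cinner_axis_mult_vec_axis
          mult_vec_axis_nth cinner_axis_left diag m_def[symmetric] algebra_simps)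
    then have "Re (cinner x (M *v x)) = - 2 * (cmod m)^2"
      by (simp add: mult_cnj_eq_cmod_sq)
    then show ?thesis
      using psd_quadratic_nonneg[OF M, of x] by (simp add: m_def)
  qed
  then show ?thesis
    by (simp add: vec_eq_iff)
qed

lemma psd_eq_0_if_Re_trace_le_0:
  fixes M :: "complex^'n^'n"
  assumes M: "psd M" and "Re (trace M) \<le> 0"
  shows "M = 0"
proof (rule psd_eq_0_if_diag_eq_0[OF M])
  fix i
  have "(\<Sum>i\<in>UNIV. Re (M $ i $ i)) = 0"
    using assms psd_Re_trace_nonneg[OF M] by (simp add: trace_def)
  then have "Re (M $ i $ i) = 0"
    using psd_diag(2)[OF M] by (simp add: sum_nonneg_eq_0_iff)
  then show "M $ i $ i = 0"
    using psd_diag(1)[OF M, of i] by simp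
qed

section \<open>Schur complements and density matrices\<close>

text \<open>If \<open>\<langle>x, \<rho> x\<rangle> = 0\<close>, division by zero makes \<open>schur_compl \<rho> x = \<rho>\<close>, which is
  harmless: for psd \<open>\<rho>\<close> then \<open>\<rho> x = 0\<close>.\<close>

definition schur_compl :: "complex^'n^'n \<Rightarrow> complex^'n \<Rightarrow> complex^'n^'n" where
  "schur_compl \<rho> x = \<rho> - (1 / Re (cinner x (\<rho> *v x))) *\<^sub>R outer (\<rho> *v x) (\<rho> *v x)"

lemma psd_schur_compl:
  assumes \<rho>: "psd \<rho>"
  shows "psd (schur_compl \<rho> x)"
proof -
  define p where "p = Re (cinner x (\<rho> *v x))"
  have "adjoint_mat (schur_compl \<rho> x) = schur_compl \<rho> x"
    by (simp add: schur_compl_def adjoint_diff adjoint_scaleR adjoint_outer psd_hermitian[OF \<rho>])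
  moreover have "(cmod (cinner x (\<rho> *v y)))^2 / p \<le> Re (cinner y (\<rho> *v y))" for y
    using psd_cauchy_schwarz[OF \<rho>, of x y] psd_quadratic_nonneg[OF \<rho>, of x]
      psd_quadratic_nonneg[OF \<rho>, of y]
    by (cases "p = 0") (simp_all add: p_def divide_le_eq mult.commute)
  moreover have "Re (cinner y (schur_compl \<rho> x *v y))
      = Re (cinner y (\<rho> *v y)) - (cmod (cinner x (\<rho> *v y)))^2 / p" for y
    by (simp add: schur_compl_def p_def matrix_vector_mult_diff_rdistrib cinner_diff_right
        scaleR_mult_vec cinner_scaleR_right cinner_outer_self cinner_hermitian[OF psd_hermitian[OF \<rho>]])
  ultimately show ?thesis
    by (simp add: psd_def)
qed

lemma trace_schur_compl:
  "trace (schur_compl \<rho> x) = trace \<rho> - of_real ((norm (\<rho> *v x))^2 / Re (cinner x (\<rho> *v x)))"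
  by (simp add: schur_compl_def trace_sub trace_scaleR trace_outer cinner_self_eq_norm)

lemma Re_schur_compl_diag:
  "Re (schur_compl \<rho> x $ i $ i) = Re (\<rho> $ i $ i) - (cmod ((\<rho> *v x) $ i))^2 / Re (cinner x (\<rho> *v x))"
  by (simp add: schur_compl_def outer_def scaleR_mat_nth mult_cnj_eq_cmod_sq
      del: vector_scaleR_component)

lemma density_quadratic_le:
  assumes \<rho>: "density_matrix \<rho>"
  shows "Re (cinner x (\<rho> *v x)) \<le> (norm x)^2"
proof -
  define p where "p = Re (cinner x (\<rho> *v x))"
  have psd: "psd \<rho>" and tr: "trace \<rho> = 1"
    using \<rho> by (simp_all add: density_matrix_def)
  show ?thesis
  proof (cases "p > 0")
    case True
    have "0 \<le> Re (trace (schur_compl \<rho> x))"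
      by (rule psd_Re_trace_nonneg[OF psd_schur_compl[OF psd]])
    also have "\<dots> = 1 - (norm (\<rho> *v x))^2 / p"
      by (simp add: trace_schur_compl tr p_def)
    finally have "(norm (\<rho> *v x))^2 \<le> p"
      using True by (simp add: divide_le_eq)
    moreover have "cinner x (\<rho> *v x) = of_real p"
      unfolding p_def by (rule cinner_hermitian_real[OF psd_hermitian[OF psd]])
    then have "p^2 \<le> (norm x)^2 * (norm (\<rho> *v x))^2"
      using cinner_cauchy_schwarz[of x "\<rho> *v x"] by simp
    ultimately have "p * p \<le> (norm x)^2 * p"
      by (metis mult_left_mono order_trans power2_eq_square zero_le_power2)
    then show ?thesis
      using True by (simp add: p_def)
  next
    case False
    then show ?thesis
      using zero_le_power2[of "norm x"] unfolding p_def by linarith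
  qed
qed

lemma rank_outer_self:
  fixes w :: "complex^'n"
  assumes "w \<noteq> 0"
  shows "rank (outer w w) = 1"
proof -
  define v where "v = (\<chi> j. cnj (w $ j))"
  obtain k where k: "w $ k \<noteq> 0"
    using assms by (metis vec_eq_iff zero_index)
  have row: "row i (outer w w) = w $ i *s v" for i
    by (simp add: row_def outer_def v_def vec_eq_iff)
  have "rows (outer w w) \<subseteq> vec.span {v}"
    by (auto simp: rows_def row vec.span_singleton)
  moreover have "v \<in> vec.span (rows (outer w w))"
  proof -
    have "v = (1 / w $ k) *s row k (outer w w)"
      using k by (simp add: row vec_eq_iff)
    moreover have "row k (outer w w) \<in> rows (outer w w)"
      by (auto simp: rows_def)
    ultimately show ?thesis
      by (metis vec.span_base vec.span_scale)
  qed
  ultimately have "vec.span (rows (outer w w)) = vec.span {v}"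
    by (simp add: vec.span_eq)
  then have "vec.dim (rows (outer w w)) = vec.dim {v}"
    by (metis vec.dim_span)
  moreover have "v \<noteq> 0"
    using k by (auto simp: v_def vec_eq_iff)
  ultimately show ?thesis
    by (simp add: row_rank_def_gen vec.dim_singleton)
qed

lemma rank_one_rows:
  fixes A :: "'a::field^'n^'m"
  assumes "rank A = 1"
  shows "\<exists>c r. \<forall>i. A $ i = c i *s r"
proof -
  obtain B where B: "rows A \<subseteq> vec.span B" "card B = 1"
    using vec.basis_exists[of "rows A"] assms by (metis row_rank_def_gen)
  then obtain r where "B = {r}"
    by (auto simp: card_Suc_eq)
  then have "\<forall>i. \<exists>c. A $ i = c *s r"
    using B(1) by (auto simp: rows_def row_def vec.span_singleton)
  then show ?thesis
    by metis
qed

lemma pure_state_eq_outer: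
  fixes \<sigma> :: "complex^'n^'n"
  assumes "pure_state \<sigma>"
  obtains \<psi> where "\<sigma> = outer \<psi> \<psi>" and "norm \<psi> = 1"
proof -
  have psd: "psd \<sigma>" and tr: "trace \<sigma> = 1" and rk: "rank \<sigma> = 1"
    using assms by (auto simp: pure_state_def density_matrix_def)
  obtain c r where "\<forall>i. \<sigma> $ i = c i *s r"
    using rank_one_rows[OF rk] by blast
  then have rank_one: "\<sigma> $ i $ k * \<sigma> $ k $ j = \<sigma> $ i $ j * \<sigma> $ k $ k" for i j k
    by (simp add: algebra_simps)
  obtain k where "\<sigma> $ k $ k \<noteq> 0"
    using tr by (metis (mono_tags) sum.neutral trace_def zero_neq_one)
  define s where "s = Re (\<sigma> $ k $ k)"
  have skk: "\<sigma> $ k $ k = of_real s"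
    unfolding s_def by (rule psd_diag(1)[OF psd])
  have "0 \<le> s"
    unfolding s_def by (rule psd_diag(2)[OF psd])
  with \<open>\<sigma> $ k $ k \<noteq> 0\<close> skk have "s > 0"
    by auto
  define \<psi> where "\<psi> = (\<chi> i. \<sigma> $ i $ k / of_real (sqrt s))"
  have "outer \<psi> \<psi> $ i $ j = \<sigma> $ i $ j" for i j
  proof -
    have "cnj (\<sigma> $ j $ k) = \<sigma> $ k $ j"
      using psd_hermitian[OF psd] by (auto simp: adjoint_mat_def vec_eq_iff)
    moreover have "of_real (sqrt s) * of_real (sqrt s) = (of_real s :: complex)"
      using \<open>s > 0\<close> by (simp flip: of_real_mult)
    ultimately show ?thesis
      using \<open>s > 0\<close> by (simp add: outer_def \<psi>_def rank_one skk)
  qed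
  then have "\<sigma> = outer \<psi> \<psi>"
    by (simp add: vec_eq_iff)
  moreover have "norm \<psi> = 1"
  proof -
    have "(norm \<psi>)^2 = 1"
      using trace_outer[of \<psi> \<psi>] tr Re_cinner_self[of \<psi>] by (simp add: \<open>\<sigma> = outer \<psi> \<psi>\<close>[symmetric])
    then show ?thesis
      using norm_ge_zero[of \<psi>] by (auto simp: power2_eq_1_iff)
  qed
  ultimately show ?thesis
    using that by blast
qed

lemma mixed_state_quadratic_less:
  assumes \<rho>: "mixed_state \<rho>" and x: "norm x = 1"
  shows "Re (cinner x (\<rho> *v x)) < 1"
proof (rule ccontr)
  have dm: "density_matrix \<rho>" and psd: "psd \<rho>" and tr: "trace \<rho> = 1" and rk: "rank \<rho> \<noteq> 1"
    using \<rho> by (auto simp: mixed_state_def density_matrix_def)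
  define w where "w = \<rho> *v x"
  assume "\<not> Re (cinner x (\<rho> *v x)) < 1"
  then have p: "Re (cinner x (\<rho> *v x)) = 1"
    using density_quadratic_le[OF dm, of x] x by simp
  then have "cinner x w = 1"
    using cinner_hermitian_real[OF psd_hermitian[OF psd], of x] by (simp add: w_def)
  then have "1 \<le> (norm w)^2"
    using cinner_cauchy_schwarz[of x w] x by simp
  then have "Re (trace (schur_compl \<rho> x)) \<le> 0"
    by (simp add: trace_schur_compl tr p w_def)
  then have "schur_compl \<rho> x = 0"
    by (rule psd_eq_0_if_Re_trace_le_0[OF psd_schur_compl[OF psd]])
  then have "\<rho> = outer w w"
    by (simp add: schur_compl_def p w_def)
  moreover have "w \<noteq> 0"
    using \<open>1 \<le> (norm w)^2\<close> by auto
  ultimately show False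
    using rk rank_outer_self[OF \<open>w \<noteq> 0\<close>] by simp
qed

lemma mixed_state_quadratic_bound:
  fixes \<rho> :: "complex^'n^'n"
  assumes "mixed_state \<rho>"
  obtains L where "0 \<le> L" and "L < 1" and "\<And>x. Re (cinner x (\<rho> *v x)) \<le> L * (norm x)^2"
proof -
  have "axis undefined 1 \<noteq> (0::complex^'n)"
    by (simp add: axis_eq_0_iff)
  then have "(UNIV::(complex^'n) set) \<noteq> {0}"
    by blast
  then obtain x where "norm x = 1"
    and max: "\<forall>y. Re (cinner y (\<rho> *v y)) \<le> Re (cinner x (\<rho> *v x)) * (norm y)^2"
    using quadratic_form_max_on_subspace[OF subspace_UNIV, where A = \<rho>] by auto
  moreover have "Re (cinner x (\<rho> *v x)) < 1"
    by (rule mixed_state_quadratic_less[OF assms \<open>norm x = 1\<close>])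
  moreover have "0 \<le> Re (cinner x (\<rho> *v x))"
    using assms by (simp add: mixed_state_def density_matrix_def psd_quadratic_nonneg)
  ultimately show ?thesis
    using that by blast
qed

lemma cmod_cinner_mult_vec_le:
  fixes A :: "complex^'n^'n"
  shows "cmod (cinner x (A *v x)) \<le> real CARD('n)^2 * norm A * (norm x)^2"
proof -
  have entry: "cmod (A $ i $ j) \<le> norm A" for i j
    using Finite_Cartesian_Product.norm_nth_le[where x = "A $ i" and i = j]
      Finite_Cartesian_Product.norm_nth_le[where x = A and i = i]
    by linarith
  have "cmod (cinner x (A *v x)) \<le> (\<Sum>i\<in>UNIV. cmod (x $ i) * (\<Sum>j\<in>UNIV. cmod (A $ i $ j) * cmod (x $ j)))"
    unfolding cinner_def matrix_vector_mult_def vec_lambda_beta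
    by (rule order_trans[OF norm_sum])
       (auto intro!: sum_mono mult_left_mono order_trans[OF norm_sum] simp: norm_mult)
  also have "\<dots> \<le> (\<Sum>i\<in>(UNIV::'n set). norm x * (\<Sum>j\<in>(UNIV::'n set). norm A * norm x))"
    by (intro sum_mono mult_mono Finite_Cartesian_Product.norm_nth_le entry sum_nonneg) auto
  also have "\<dots> = real CARD('n)^2 * norm A * (norm x)^2"
    by (simp add: power2_eq_square)
  finally show ?thesis .
qed

lemma Re_cinner_mult_vec_le_dist:
  fixes A B :: "complex^'n^'n"
  shows "Re (cinner x (A *v x)) \<le> Re (cinner x (B *v x)) + real CARD('n)^2 * dist A B * (norm x)^2"
proof -
  have "Re (cinner x ((A - B) *v x)) \<le> real CARD('n)^2 * dist A B * (norm x)^2"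
    using cmod_cinner_mult_vec_le[of x "A - B"] abs_Re_le_cmod[of "cinner x ((A - B) *v x)"]
    by (simp add: dist_norm)
  then show ?thesis
    by (simp add: matrix_vector_mult_diff_rdistrib cinner_diff_right)
qed

lemma density_Re_trace_schur_compl_ge:
  fixes \<rho> :: "complex^'n^'n"
  assumes \<rho>: "density_matrix \<rho>" and "0 \<le> L" and bound: "\<And>x. Re (cinner x (\<rho> *v x)) \<le> L * (norm x)^2"
  shows "1 - L \<le> Re (trace (schur_compl \<rho> \<psi>))"
proof -
  have psd: "psd \<rho>" and tr: "trace \<rho> = 1"
    using \<rho> by (simp_all add: density_matrix_def)
  have "(norm (\<rho> *v \<psi>))^2 \<le> L * Re (cinner \<psi> (\<rho> *v \<psi>))"
    by (rule psd_norm_mult_vec_sq_le[OF psd bound])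
  then have "(norm (\<rho> *v \<psi>))^2 / Re (cinner \<psi> (\<rho> *v \<psi>)) \<le> L"
    using \<open>0 \<le> L\<close> psd_quadratic_nonneg[OF psd, of \<psi>]
    by (cases "Re (cinner \<psi> (\<rho> *v \<psi>)) = 0") (simp_all add: divide_le_eq)
  then show ?thesis
    by (simp add: trace_schur_compl tr)
qed

text \<open>Near a mixed state the quadratic form stays uniformly below \<open>1\<close> on unit vectors, so the
  Schur complement along any direction keeps a fixed amount of trace.\<close>

lemma mixed_state_schur_compl_trace_bound:
  fixes \<rho>\<^sub>0 :: "complex^'n^'n"
  assumes "mixed_state \<rho>\<^sub>0"
  obtains r \<kappa> where "0 < r" and "0 < \<kappa>" and "\<kappa> \<le> 1"
    and "\<And>\<rho> \<psi>. \<rho> \<in> ball \<rho>\<^sub>0 r \<Longrightarrow> density_matrix \<rho> \<Longrightarrow> \<kappa> \<le> Re (trace (schur_compl \<rho> \<psi>))"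
proof -
  obtain L where L: "0 \<le> L" "L < 1" and bound: "\<And>x. Re (cinner x (\<rho>\<^sub>0 *v x)) \<le> L * (norm x)^2"
    using mixed_state_quadratic_bound[OF assms] by blast
  define \<kappa> where "\<kappa> = (1 - L) / 2"
  define r where "r = \<kappa> / real CARD('n)^2"
  have "0 < \<kappa>" "\<kappa> \<le> 1" "0 < r"
    using L by (simp_all add: \<kappa>_def r_def)
  moreover have "\<kappa> \<le> Re (trace (schur_compl \<rho> \<psi>))"
    if "\<rho> \<in> ball \<rho>\<^sub>0 r" and "density_matrix \<rho>" for \<rho> \<psi>
  proof -
    have "Re (cinner x (\<rho> *v x)) \<le> (1 - \<kappa>) * (norm x)^2" for x
    proof -
      have "real CARD('n)^2 * dist \<rho> \<rho>\<^sub>0 \<le> \<kappa>"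
        using \<open>\<rho> \<in> ball \<rho>\<^sub>0 r\<close> by (simp add: r_def dist_commute field_simps)
      then have "real CARD('n)^2 * dist \<rho> \<rho>\<^sub>0 * (norm x)^2 \<le> \<kappa> * (norm x)^2"
        by (simp add: mult_right_mono)
      moreover have "(1 - \<kappa>) * (norm x)^2 = L * (norm x)^2 + \<kappa> * (norm x)^2"
        by (simp add: \<kappa>_def algebra_simps)
      ultimately show ?thesis
        using Re_cinner_mult_vec_le_dist[of x \<rho> \<rho>\<^sub>0] bound[of x] by linarith
    qed
    with \<open>density_matrix \<rho>\<close> show ?thesis
      using density_Re_trace_schur_compl_ge[of \<rho> "1 - \<kappa>"] \<open>\<kappa> \<le> 1\<close> by simp
  qed
  ultimately show ?thesis
    using that by blast
qed

lemma exists_Re_diag_ge_average: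
  fixes A :: "complex^'n^'n"
  obtains i where "Re (trace A) / CARD('n) \<le> Re (A $ i $ i)"
proof (rule ccontr)
  assume "\<not> thesis"
  then have "Re (A $ i $ i) < Re (trace A) / CARD('n)" for i
    using that not_le by blast
  then have "(\<Sum>i\<in>UNIV. Re (A $ i $ i)) < (\<Sum>i\<in>(UNIV::'n set). Re (trace A) / CARD('n))"
    by (intro sum_strict_mono) auto
  then show False
    by (simp add: trace_def)
qed

section \<open>Fidelity with states of rank two\<close>

text \<open>\<open>frame_mat a b K\<close> is \<open>F K F\<^sup>*\<close>, where \<open>F\<close> has the columns \<open>a\<close>, \<open>b\<close> and
  \<open>K = (k\<^sub>1\<^sub>1 k\<^sub>1\<^sub>2; k\<^sub>2\<^sub>1 k\<^sub>2\<^sub>2)\<close>.\<close>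

definition frame_mat ::
    "complex^'n \<Rightarrow> complex^'n \<Rightarrow> complex \<Rightarrow> complex \<Rightarrow> complex \<Rightarrow> complex \<Rightarrow> complex^'n^'n" where
  "frame_mat a b k11 k12 k21 k22 = outer (k11 *s a + k21 *s b) a + outer (k12 *s a + k22 *s b) b"

lemma frame_mat_mult_vec:
  "frame_mat a b k11 k12 k21 k22 *v x
     = (k11 * cinner a x + k12 * cinner b x) *s a + (k21 * cinner a x + k22 * cinner b x) *s b"
  by (simp add: frame_mat_def matrix_vector_mult_add_rdistrib outer_mult_vec vec_eq_iff algebra_simps)

lemma trace_frame_mat:
  "trace (frame_mat a b k11 k12 k21 k22)
     = k11 * cinner a a + k21 * cinner a b + k12 * cinner b a + k22 * cinner b b"
  by (simp add: frame_mat_def trace_add trace_outer cinner_add_right cinner_scale_right)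

text \<open>The hypotheses say \<open>K G K = 1\<close> for the Gram matrix \<open>G = (p r; r\<^sup>* q)\<close> of \<open>a\<close>, \<open>b\<close>.\<close>

lemma frame_mat_mult_self:
  fixes a b :: "complex^'n"
  defines "p \<equiv> cinner a a" and "q \<equiv> cinner b b" and "r \<equiv> cinner a b"
  assumes "(k11 * p + k12 * cnj r) * k11 + (k11 * r + k12 * q) * k21 = 1"
    and "(k11 * p + k12 * cnj r) * k12 + (k11 * r + k12 * q) * k22 = 0"
    and "(k21 * p + k22 * cnj r) * k11 + (k21 * r + k22 * q) * k21 = 0"
    and "(k21 * p + k22 * cnj r) * k12 + (k21 * r + k22 * q) * k22 = 1"
  shows "frame_mat a b k11 k12 k21 k22 ** frame_mat a b k11 k12 k21 k22 = outer a a + outer b b"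
proof -
  have "(frame_mat a b k11 k12 k21 k22 ** frame_mat a b k11 k12 k21 k22) *v x
      = (outer a a + outer b b) *v x" for x
  proof -
    define \<alpha> \<beta> where "\<alpha> = cinner a x" and "\<beta> = cinner b x"
    have "(frame_mat a b k11 k12 k21 k22 ** frame_mat a b k11 k12 k21 k22) *v x
      = (((k11 * p + k12 * cnj r) * k11 + (k11 * r + k12 * q) * k21) * \<alpha>
          + ((k11 * p + k12 * cnj r) * k12 + (k11 * r + k12 * q) * k22) * \<beta>) *s a
        + (((k21 * p + k22 * cnj r) * k11 + (k21 * r + k22 * q) * k21) * \<alpha>
          + ((k21 * p + k22 * cnj r) * k12 + (k21 * r + k22 * q) * k22) * \<beta>) *s b"
      by (simp add: matrix_vector_mul_assoc[symmetric] frame_mat_mult_vec cinner_add_right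
          cinner_scale_right \<alpha>_def \<beta>_def p_def q_def r_def cinner_commute[of b a] algebra_simps)
    also have "\<dots> = (outer a a + outer b b) *v x"
      by (simp add: assms(4-7) \<alpha>_def \<beta>_def matrix_vector_mult_add_rdistrib outer_mult_vec)
    finally show ?thesis .
  qed
  then show ?thesis
    by (simp add: matrix_eq)
qed

lemma psd_frame_mat:
  fixes x y :: real and k :: complex
  assumes "0 < x" and "(cmod k)^2 \<le> x * y"
  shows "psd (frame_mat a b (of_real x) k (cnj k) (of_real y))"
proof -
  have "0 \<le> Re (cinner v (frame_mat a b (of_real x) k (cnj k) (of_real y) *v v))" for v
  proof -
    define \<alpha> \<beta> where "\<alpha> = cinner a v" and "\<beta> = cinner b v"
    have "of_real x * cinner v (frame_mat a b (of_real x) k (cnj k) (of_real y) *v v)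
        = (of_real x * \<alpha> + k * \<beta>) * cnj (of_real x * \<alpha> + k * \<beta>)
          + of_real (x * y - (cmod k)^2) * (\<beta> * cnj \<beta>)"
      by (simp add: frame_mat_mult_vec cinner_add_right cinner_scale_right cinner_commute[of v]
          \<alpha>_def[symmetric] \<beta>_def[symmetric] mult_cnj_eq_cmod_sq[symmetric] algebra_simps
          del: of_real_power)
    also have "\<dots> = of_real ((cmod (of_real x * \<alpha> + k * \<beta>))^2 + (x * y - (cmod k)^2) * (cmod \<beta>)^2)"
      by (simp only: mult_cnj_eq_cmod_sq of_real_add of_real_mult)
    finally have "Re (of_real x * cinner v (frame_mat a b (of_real x) k (cnj k) (of_real y) *v v))
        = (cmod (of_real x * \<alpha> + k * \<beta>))^2 + (x * y - (cmod k)^2) * (cmod \<beta>)^2"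
      by simp
    then have "x * Re (cinner v (frame_mat a b (of_real x) k (cnj k) (of_real y) *v v))
        = (cmod (of_real x * \<alpha> + k * \<beta>))^2 + (x * y - (cmod k)^2) * (cmod \<beta>)^2"
      by simp
    moreover have "0 \<le> (cmod (of_real x * \<alpha> + k * \<beta>))^2 + (x * y - (cmod k)^2) * (cmod \<beta>)^2"
      using assms(2) by simp
    ultimately show ?thesis
      using assms(1) by (metis zero_le_mult_iff not_less)
  qed
  moreover have "adjoint_mat (frame_mat a b (of_real x) k (cnj k) (of_real y))
      = frame_mat a b (of_real x) k (cnj k) (of_real y)"
    by (simp add: frame_mat_def adjoint_mat_def outer_def vec_eq_iff algebra_simps)
  ultimately show ?thesis
    by (simp add: psd_def)
qed

text \<open>For \<open>G = (p r; r\<^sup>* q)\<close> with \<open>d = \<surd>det G\<close> and \<open>t = \<surd>(tr G + 2 d)\<close>, one has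
  \<open>\<surd>G = (G + d) / t\<close>; the matrix \<open>K = adj (G + d) / (d t)\<close> below is its inverse \<open>G\<^sup>-\<^sup>1\<^sup>/\<^sup>2\<close>.\<close>

lemma gram2_inverse_sqrt:
  fixes p q r d t :: complex
  assumes R: "r * cnj r = p * q - d^2" and T: "t^2 = p + q + 2 * d" and "d \<noteq> 0" and "t \<noteq> 0"
  defines "k11 \<equiv> (q + d) / (d * t)" and "k12 \<equiv> - r / (d * t)"
    and "k21 \<equiv> - cnj r / (d * t)" and "k22 \<equiv> (p + d) / (d * t)"
  shows "(k11 * p + k12 * cnj r) * k11 + (k11 * r + k12 * q) * k21 = 1"
    and "(k11 * p + k12 * cnj r) * k12 + (k11 * r + k12 * q) * k22 = 0"
    and "(k21 * p + k22 * cnj r) * k11 + (k21 * r + k22 * q) * k21 = 0"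
    and "(k21 * p + k22 * cnj r) * k12 + (k21 * r + k22 * q) * k22 = 1"
    and "k11 * p + k21 * r + k12 * cnj r + k22 * q = t"
proof -
  have dt: "d * t \<noteq> 0"
    using assms(3,4) by simp
  show "(k11 * p + k12 * cnj r) * k11 + (k11 * r + k12 * q) * k21 = 1"
    unfolding k11_def k12_def k21_def k22_def using dt
    by (simp add: field_simps power2_eq_square) (use R T in algebra)
  show "(k11 * p + k12 * cnj r) * k12 + (k11 * r + k12 * q) * k22 = 0"
    unfolding k11_def k12_def k21_def k22_def using dt
    by (simp add: field_simps power2_eq_square) (use R T in algebra)
  show "(k21 * p + k22 * cnj r) * k11 + (k21 * r + k22 * q) * k21 = 0"
    unfolding k11_def k12_def k21_def k22_def using dt
    by (simp add: field_simps power2_eq_square) (use R T in algebra)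
  show "(k21 * p + k22 * cnj r) * k12 + (k21 * r + k22 * q) * k22 = 1"
    unfolding k11_def k12_def k21_def k22_def using dt
    by (simp add: field_simps power2_eq_square) (use R T in algebra)
  show "k11 * p + k21 * r + k12 * cnj r + k22 * q = t"
    unfolding k11_def k12_def k21_def k22_def using dt
    by (simp add: field_simps power2_eq_square) (use R T in algebra)
qed

lemma psd_frame_mat_gram2_inverse_sqrt:
  fixes p q d t :: real and r :: complex
  assumes "0 \<le> p" and "0 \<le> q" and "0 < d" and "0 < t" and "(cmod r)^2 = p * q - d^2"
  shows "psd (frame_mat a b (of_real ((q + d) / (d * t))) (- r / of_real (d * t))
    (cnj (- r / of_real (d * t))) (of_real ((p + d) / (d * t))))"
proof (rule psd_frame_mat)
  show "0 < (q + d) / (d * t)"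
    using assms by (simp add: add_nonneg_pos)
  have "0 \<le> d * p + d * q" "0 \<le> d^2"
    using assms by simp_all
  moreover have "(q + d) * (p + d) = p * q + (d * p + d * q) + d^2"
    by (simp add: algebra_simps power2_eq_square)
  ultimately have "(cmod r)^2 / (d * t)^2 \<le> (q + d) * (p + d) / (d * t)^2"
    using assms(5) by (intro divide_right_mono) simp_all
  moreover have "cmod (- r / of_real (d * t)) = cmod r / (d * t)"
    using assms by (simp add: norm_divide norm_mult)
  ultimately show "(cmod (- r / of_real (d * t)))^2 \<le> (q + d) / (d * t) * ((p + d) / (d * t))"
    by (simp add: power_divide power2_eq_square)
qed

lemma Re_trace_msqrt_rank2_nondegenerate:
  fixes a b :: "complex^'n"
  assumes "gram_det a b > 0"
  shows "Re (trace (msqrt (outer a a + outer b b)))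
    = sqrt ((norm a)^2 + (norm b)^2 + 2 * sqrt (gram_det a b))"
proof -
  define p q d where "p = (norm a)^2" and "q = (norm b)^2" and "d = sqrt (gram_det a b)"
  define t where "t = sqrt (p + q + 2 * d)"
  define r where "r = cinner a b"
  have "d > 0"
    using assms by (simp add: d_def)
  then have "t > 0"
    by (simp add: t_def p_def q_def add_nonneg_pos)
  have d2: "(cmod r)^2 = p * q - d^2"
    using assms by (simp add: d_def p_def q_def r_def gram_det_def)
  have R: "r * cnj r = of_real p * of_real q - (of_real d)^2"
    by (simp add: mult_cnj_eq_cmod_sq d2 flip: of_real_power of_real_mult of_real_diff)
  have T: "(of_real t)^2 = of_real p + of_real q + 2 * (of_real d :: complex)"
    using \<open>d > 0\<close> by (simp add: t_def p_def q_def flip: of_real_power)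
  note K = gram2_inverse_sqrt[OF R T, simplified]
  define k where "k = - r / of_real (d * t)"
  define S where "S = frame_mat a b (of_real ((q + d) / (d * t))) k (cnj k) (of_real ((p + d) / (d * t)))"
  have "S ** S = outer a a + outer b b"
    unfolding S_def by (rule frame_mat_mult_self)
      (use K \<open>d > 0\<close> \<open>t > 0\<close> in \<open>simp_all add: k_def p_def q_def r_def cinner_self_eq_norm cinner_commute[of b a]\<close>)
  moreover have "psd S"
    unfolding S_def k_def using \<open>d > 0\<close> \<open>t > 0\<close> d2
    by (intro psd_frame_mat_gram2_inverse_sqrt) (simp_all add: p_def q_def)
  moreover have "psd (outer a a + outer b b)"
    by (intro psd_add psd_outer_self)
  moreover have "trace S = of_real t"
    unfolding S_def trace_frame_mat
    using K \<open>d > 0\<close> \<open>t > 0\<close> by (simp add: k_def p_def q_def r_def cinner_self_eq_norm cinner_commute[of b a])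
  ultimately show ?thesis
    by (simp add: msqrt_eqI t_def p_def q_def d_def)
qed

lemma Re_trace_msqrt_rank2:
  fixes a b :: "complex^'n"
  shows "Re (trace (msqrt (outer a a + outer b b)))
    = sqrt ((norm a)^2 + (norm b)^2 + 2 * sqrt (gram_det a b))"
proof (cases "gram_det a b > 0")
  case True
  then show ?thesis
    by (rule Re_trace_msqrt_rank2_nondegenerate)
next
  case False
  then have g: "gram_det a b = 0"
    using gram_det_nonneg[of a b] by simp
  show ?thesis
  proof (cases "a = 0")
    case True
    then show ?thesis
      using Re_trace_msqrt_outer_self[of b] g by simp
  next
    case False
    define c where "c = cinner a b / cinner a a"
    have b: "b = c *s a"
      using norm_sub_projection_sq[OF False, of b] g by (simp add: c_def)
    define w where "w = sqrt (1 + (cmod c)^2) *\<^sub>R a"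
    have "outer a a + outer b b = (1 + (cmod c)^2) *\<^sub>R outer a a"
      by (simp add: b outer_scale_self scaleR_add_left)
    also have "\<dots> = outer w w"
      by (simp add: w_def outer_scaleR_self)
    finally have "outer a a + outer b b = outer w w" .
    moreover have "norm w = sqrt ((norm a)^2 + (norm b)^2)"
    proof -
      have "(norm a)^2 + (norm b)^2 = (norm a)^2 * (1 + (cmod c)^2)"
        by (simp add: b norm_scale algebra_simps power_mult_distrib)
      then show ?thesis
        by (simp add: w_def real_sqrt_mult)
    qed
    ultimately show ?thesis
      using Re_trace_msqrt_outer_self[of w] g by simp
  qed
qed

lemma infidelity_not_psd:
  assumes "\<not> psd \<rho>"
  shows "infidelity \<rho> \<sigma> = 1"
proof -
  have "msqrt \<rho> = 0"
    using assms by (simp add: msqrt_def)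
  then show ?thesis
    by (simp add: infidelity_def msqrt_zero trace_def)
qed

lemma infidelity_rank2:
  fixes \<rho> :: "complex^'n^'n"
  assumes "psd \<rho>"
  shows "infidelity \<rho> (outer u u + outer v v) = 1 - sqrt (Re (cinner u (\<rho> *v u)) + Re (cinner v (\<rho> *v v))
      + 2 * sqrt (Re (cinner u (\<rho> *v u)) * Re (cinner v (\<rho> *v v)) - (cmod (cinner u (\<rho> *v v)))^2))"
proof -
  define R where "R = msqrt \<rho>"
  have "R ** (outer u u + outer v v) ** R = outer (R *v u) (R *v u) + outer (R *v v) (R *v v)"
    using psd_hermitian[OF psd_msqrt(1)[OF assms]]
    by (simp add: R_def matrix_add_ldistrib matrix_add_rdistrib matrix_mult_outer outer_matrix_mult)
  moreover have "cinner (R *v x) (R *v y) = cinner x (\<rho> *v y)" for x y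
    unfolding R_def by (rule cinner_msqrt[OF assms])
  ultimately show ?thesis
    by (simp add: infidelity_def R_def[symmetric] Re_trace_msqrt_rank2 gram_det_def
        Re_cinner_self[symmetric])
qed

lemma infidelity_pure:
  fixes \<rho> :: "complex^'n^'n"
  assumes "psd \<rho>"
  shows "infidelity \<rho> (outer \<psi> \<psi>) = 1 - sqrt (Re (cinner \<psi> (\<rho> *v \<psi>)))"
  using infidelity_rank2[OF assms, of \<psi> 0] by simp

lemma infidelity_rank2_abs_le:
  fixes \<rho> :: "complex^'n^'n"
  assumes \<rho>: "density_matrix \<rho>" and "norm u \<le> 1" and "norm v \<le> 1"
  shows "\<bar>infidelity \<rho> (outer u u + outer v v)\<bar> \<le> 1"
proof -
  have psd: "psd \<rho>"
    using \<rho> by (simp add: density_matrix_def)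
  define p q g where "p = Re (cinner u (\<rho> *v u))" and "q = Re (cinner v (\<rho> *v v))"
    and "g = p * q - (cmod (cinner u (\<rho> *v v)))^2"
  have "(norm u)^2 \<le> 1" "(norm v)^2 \<le> 1"
    using assms(2,3) by (simp_all add: power_le_one)
  then have p: "0 \<le> p" "p \<le> 1" and q: "0 \<le> q" "q \<le> 1"
    using psd_quadratic_nonneg[OF psd] density_quadratic_le[OF \<rho>] unfolding p_def q_def
    by (meson order_trans)+
  have "(cmod (cinner u (\<rho> *v v)))^2 \<le> p * q"
    using psd_cauchy_schwarz[OF psd, of u v] by (simp add: p_def q_def)
  moreover have "p * q \<le> 1"
    using p q by (simp add: mult_le_one)
  ultimately have "0 \<le> g" "g \<le> 1"
    unfolding g_def using zero_le_power2[of "cmod (cinner u (\<rho> *v v))"] by linarith+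
  then have "0 \<le> sqrt g" "sqrt g \<le> 1"
    by simp_all
  then have "0 \<le> p + q + 2 * sqrt g" "p + q + 2 * sqrt g \<le> 2^2"
    using p q unfolding power2_eq_square by linarith+
  then have "0 \<le> sqrt (p + q + 2 * sqrt g)" "sqrt (p + q + 2 * sqrt g) \<le> 2"
    using real_sqrt_le_mono real_sqrt_ge_zero by fastforce+
  then show ?thesis
    unfolding infidelity_rank2[OF psd] p_def[symmetric] q_def[symmetric] g_def[symmetric]
    by (intro abs_leI) linarith+
qed

section \<open>Mixing a basis vector into a pure state\<close>

definition perturbed_state :: "real \<Rightarrow> complex^'n \<Rightarrow> 'n \<Rightarrow> complex^'n^'n" where
  "perturbed_state e \<psi> i = (1 - e) *\<^sub>R outer \<psi> \<psi> + e *\<^sub>R outer (axis i 1) (axis i 1)"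

lemma perturbed_state_eq_rank2:
  assumes "0 \<le> e" and "e \<le> 1"
  shows "perturbed_state e \<psi> i
    = outer (sqrt (1 - e) *\<^sub>R \<psi>) (sqrt (1 - e) *\<^sub>R \<psi>) + outer (sqrt e *\<^sub>R axis i 1) (sqrt e *\<^sub>R axis i 1)"
  using assms by (simp add: perturbed_state_def outer_scaleR_self)

lemma density_perturbed_state:
  assumes "norm \<psi> = 1" and "0 \<le> e" and "e \<le> 1"
  shows "density_matrix (perturbed_state e \<psi> i)"
  using assms
  by (simp add: density_matrix_def perturbed_state_def psd_add psd_scaleR psd_outer_self trace_add
      trace_scaleR trace_outer cinner_self_eq_norm cinner_axis_left flip: of_real_add)

lemma sqrt_add_sqrt_schur_le:
  fixes p q c :: real
  assumes "0 \<le> p" and "0 \<le> c" and "c \<le> p * q"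
  shows "sqrt p + sqrt (q - c / p) \<le> sqrt (p + q + 2 * sqrt (p * q - c))"
proof (cases "p = 0")
  case True
  then show ?thesis
    using assms by simp
next
  case False
  define s where "s = q - c / p"
  have "p > 0"
    using assms(1) False by simp
  then have s: "0 \<le> s" "s \<le> q" "p * s = p * q - c"
    using assms by (simp_all add: s_def field_simps mult.commute)
  have "(sqrt p + sqrt s)^2 = p + s + 2 * sqrt (p * s)"
    using assms(1) s(1) by (simp add: power2_sum real_sqrt_mult)
  also have "\<dots> \<le> p + q + 2 * sqrt (p * q - c)"
    using s by simp
  finally show ?thesis
    unfolding s_def[symmetric] using assms(1) s(1) by (intro real_le_rsqrt) simp_all
qed

lemma sqrt_diff_le_sqrt_mult:
  fixes p e :: real
  assumes "0 \<le> p" and "p \<le> 1" and "0 \<le> e" and "e \<le> 1"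
  shows "sqrt p - e \<le> sqrt ((1 - e) * p)"
proof -
  have "1 - e \<le> sqrt (1 - e)"
    using assms by (simp add: real_le_rsqrt power2_eq_square mult_left_le)
  then have "(1 - e) * sqrt p \<le> sqrt (1 - e) * sqrt p"
    by (rule mult_right_mono) (simp add: assms)
  moreover have "e * sqrt p \<le> e"
    using assms by (simp add: mult_left_le)
  moreover have "(1 - e) * sqrt p = sqrt p - e * sqrt p"
    by (simp add: algebra_simps)
  ultimately show ?thesis
    using real_sqrt_mult[of "1 - e" p] by linarith
qed

lemma cinner_mult_vec_axis:
  assumes "psd \<rho>"
  shows "cinner \<psi> (\<rho> *v axis i 1) = cnj ((\<rho> *v \<psi>) $ i)"
  by (simp add: cinner_hermitian[OF psd_hermitian[OF assms]] cinner_axis_right)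

lemma infidelity_perturbed_state:
  fixes \<rho> :: "complex^'n^'n" and \<psi> :: "complex^'n" and i :: 'n
  assumes "psd \<rho>" and "0 \<le> e" and "e \<le> 1"
  defines "p \<equiv> Re (cinner \<psi> (\<rho> *v \<psi>))" and "q \<equiv> Re (\<rho> $ i $ i)" and "c \<equiv> (cmod ((\<rho> *v \<psi>) $ i))^2"
  shows "infidelity \<rho> (perturbed_state e \<psi> i)
    = 1 - sqrt ((1 - e) * p + e * q + 2 * sqrt (((1 - e) * p) * (e * q) - (1 - e) * e * c))"
proof -
  define u v where "u = sqrt (1 - e) *\<^sub>R \<psi>" and "v = sqrt e *\<^sub>R (axis i 1 :: complex^'n)"
  have "Re (cinner u (\<rho> *v u)) = (1 - e) * p"
    using assms(3) by (simp add: u_def p_def mult_vec_scaleR cinner_scaleR_left cinner_scaleR_right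
        mult.assoc[symmetric] flip: of_real_mult)
  moreover have "Re (cinner v (\<rho> *v v)) = e * q"
    using assms(2) by (simp add: v_def q_def mult_vec_scaleR cinner_scaleR_left cinner_scaleR_right
        cinner_axis_mult_vec_axis mult.assoc[symmetric] flip: of_real_mult)
  moreover have "(cmod (cinner u (\<rho> *v v)))^2 = (1 - e) * e * c"
    using assms(2,3)
    by (simp add: u_def v_def c_def mult_vec_scaleR cinner_scaleR_left cinner_scaleR_right
        cinner_mult_vec_axis[OF assms(1)] norm_mult power_mult_distrib)
  ultimately show ?thesis
    by (simp add: perturbed_state_eq_rank2[OF assms(2,3)] infidelity_rank2[OF assms(1)]
        u_def[symmetric] v_def[symmetric])
qed

lemma psd_cmod_mult_vec_nth_le:
  assumes "psd \<rho>"
  shows "(cmod ((\<rho> *v \<psi>) $ i))^2 \<le> Re (cinner \<psi> (\<rho> *v \<psi>)) * Re (\<rho> $ i $ i)"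
  using psd_cauchy_schwarz[OF assms, of \<psi> "axis i 1"]
  by (simp add: cinner_mult_vec_axis[OF assms] cinner_axis_mult_vec_axis mult_vec_axis_nth)

text \<open>Mixing a little of \<open>e\<^sub>i\<close> into a pure state \<open>\<psi>\<close> costs \<open>O(e)\<close> but gains fidelity of order
  \<open>\<surd>e\<close>, as long as the Schur complement of \<open>\<rho>\<close> along \<open>\<psi>\<close> has weight on \<open>e\<^sub>i\<close>.\<close>

lemma infidelity_perturbed_state_le:
  fixes \<rho> :: "complex^'n^'n"
  assumes \<rho>: "density_matrix \<rho>" and \<psi>: "norm \<psi> = 1" and e: "0 \<le> e" "e < 1"
  shows "infidelity \<rho> (perturbed_state e \<psi> i)
    \<le> infidelity \<rho> (outer \<psi> \<psi>) + e - sqrt (e * Re (schur_compl \<rho> \<psi> $ i $ i))"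
proof -
  have psd: "psd \<rho>"
    using \<rho> by (simp add: density_matrix_def)
  define p q c where "p = Re (cinner \<psi> (\<rho> *v \<psi>))" and "q = Re (\<rho> $ i $ i)"
    and "c = (cmod ((\<rho> *v \<psi>) $ i))^2"
  have p: "0 \<le> p" "p \<le> 1"
    using psd_quadratic_nonneg[OF psd, of \<psi>] density_quadratic_le[OF \<rho>, of \<psi>] \<psi> by (simp_all add: p_def)
  have c: "0 \<le> c" "c \<le> p * q"
    using psd_cmod_mult_vec_nth_le[OF psd, of \<psi> i] by (simp_all add: c_def p_def q_def)
  have "(1 - e) * e * c \<le> (1 - e) * e * (p * q)"
    using c e by (simp add: mult_left_mono)
  then have "(1 - e) * e * c \<le> ((1 - e) * p) * (e * q)"
    by (simp add: algebra_simps)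
  then have "sqrt ((1 - e) * p) + sqrt (e * q - (1 - e) * e * c / ((1 - e) * p))
      \<le> sqrt ((1 - e) * p + e * q + 2 * sqrt (((1 - e) * p) * (e * q) - (1 - e) * e * c))"
    using p c e by (intro sqrt_add_sqrt_schur_le) simp_all
  moreover have "e * q - (1 - e) * e * c / ((1 - e) * p) = e * (q - c / p)"
    using e by (cases "p = 0") (simp_all add: field_simps)
  ultimately have "sqrt ((1 - e) * p) + sqrt (e * (q - c / p))
      \<le> sqrt ((1 - e) * p + e * q + 2 * sqrt (((1 - e) * p) * (e * q) - (1 - e) * e * c))"
    by simp
  moreover have "sqrt p - e \<le> sqrt ((1 - e) * p)"
    using p e by (intro sqrt_diff_le_sqrt_mult) simp_all
  moreover have "Re (schur_compl \<rho> \<psi> $ i $ i) = q - c / p"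
    by (simp add: Re_schur_compl_diag p_def q_def c_def)
  ultimately show ?thesis
    using e by (simp add: infidelity_perturbed_state[OF psd] infidelity_pure[OF psd] p_def q_def c_def)
qed

section \<open>Posterior risk\<close>

lemma closed_psd: "closed {A :: complex^'n^'n. psd A}"
proof -
  have "{A :: complex^'n^'n. psd A}
      = {A. adjoint_mat A = A} \<inter> (\<Inter>x. {A. 0 \<le> Re (cinner x (A *v x))})"
    by (auto simp: psd_def)
  moreover have "closed {A :: complex^'n^'n. adjoint_mat A = A}"
    unfolding adjoint_mat_def
    by (intro closed_Collect_eq continuous_on_id continuous_on_vec_lambda continuous_intros)
  moreover have "closed {A :: complex^'n^'n. 0 \<le> Re (cinner x (A *v x))}" for x
    unfolding cinner_def matrix_vector_mult_def vec_lambda_beta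
    by (intro closed_Collect_le continuous_intros)
  ultimately show ?thesis
    by (simp add: closed_INT closed_Int)
qed

lemma borel_measurable_infidelity_rank2:
  "(\<lambda>\<rho> :: complex^'n^'n. infidelity \<rho> (outer u u + outer v v)) \<in> borel_measurable borel"
proof -
  define F where "F \<rho> = 1 - sqrt (Re (cinner u (\<rho> *v u)) + Re (cinner v (\<rho> *v v))
      + 2 * sqrt (Re (cinner u (\<rho> *v u)) * Re (cinner v (\<rho> *v v)) - (cmod (cinner u (\<rho> *v v)))^2))"
    for \<rho> :: "complex^'n^'n"
  have "continuous_on UNIV F"
    unfolding F_def cinner_def matrix_vector_mult_def vec_lambda_beta by (intro continuous_intros)
  then have F: "F \<in> borel_measurable borel"
    by (rule borel_measurable_continuous_onI)
  have "(\<lambda>\<rho>. infidelity \<rho> (outer u u + outer v v)) = (\<lambda>\<rho>. if \<rho> \<in> {A. psd A} then F \<rho> else 1)"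
    by (auto simp: F_def infidelity_rank2 infidelity_not_psd)
  also have "\<dots> \<in> borel_measurable borel"
    using borel_closed[OF closed_psd] by (intro measurable_If_set[OF F measurable_const]) auto
  finally show ?thesis .
qed

lemma borel_measurable_schur_compl_diag:
  "(\<lambda>\<rho> :: complex^'n^'n. Re (schur_compl \<rho> \<psi> $ i $ i)) \<in> borel_measurable borel"
proof -
  have "continuous_on UNIV (\<lambda>\<rho> :: complex^'n^'n. Re (\<rho> $ i $ i))"
    and "continuous_on UNIV (\<lambda>\<rho> :: complex^'n^'n. (cmod ((\<rho> *v \<psi>) $ i))^2)"
    and "continuous_on UNIV (\<lambda>\<rho> :: complex^'n^'n. Re (cinner \<psi> (\<rho> *v \<psi>)))"
    unfolding cinner_def matrix_vector_mult_def vec_lambda_beta by (intro continuous_intros)+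
  then show ?thesis
    unfolding Re_schur_compl_diag
    by (intro borel_measurable_diff borel_measurable_divide borel_measurable_continuous_onI)
qed

lemma AE_finite_cover_emeasure_pos:
  assumes "finite I" and "\<And>i. i \<in> I \<Longrightarrow> W i \<in> sets M" and "B \<in> sets M" and "emeasure M B > 0"
    and "AE x in M. x \<in> B \<longrightarrow> (\<exists>i\<in>I. x \<in> W i)"
  obtains i where "i \<in> I" and "emeasure M (W i) > 0"
proof -
  have "\<exists>i\<in>I. emeasure M (W i) > 0"
  proof (rule ccontr)
    assume "\<not> (\<exists>i\<in>I. emeasure M (W i) > 0)"
    then have "AE x in M. x \<notin> W i" if "i \<in> I" for i
      using that assms(2) by (intro AE_not_in) (simp add: null_sets_def not_less)
    then have "AE x in M. \<forall>i\<in>I. x \<notin> W i"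
      using assms(1) by (simp add: AE_finite_allI)
    with assms(5) have "AE x in M. x \<notin> B"
      by eventually_elim blast
    then have "emeasure M B = 0"
      using AE_iff_measurable[OF assms(3), of "\<lambda>x. x \<notin> B"] sets.sets_into_space[OF assms(3)] by auto
    with assms(4) show False
      by simp
  qed
  then show ?thesis
    using that by blast
qed

lemma integrable_infidelity_rank2:
  fixes M :: "(complex^'n^'n) measure"
  assumes "prob_space M" and "sets M = sets borel" and "AE \<rho> in M. density_matrix \<rho>"
    and "norm u \<le> 1" and "norm v \<le> 1"
  shows "integrable M (\<lambda>\<rho>. infidelity \<rho> (outer u u + outer v v))"
proof (rule finite_measure.integrable_const_bound[where B = 1])
  show "finite_measure M"
    using assms(1) by (rule prob_space.finite_measure)
  show "AE \<rho> in M. norm (infidelity \<rho> (outer u u + outer v v)) \<le> 1"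
    using assms(3) by eventually_elim (simp add: infidelity_rank2_abs_le assms(4,5))
  show "(\<lambda>\<rho>. infidelity \<rho> (outer u u + outer v v)) \<in> borel_measurable M"
    using borel_measurable_infidelity_rank2 measurable_cong_sets[OF assms(2) refl] by blast
qed

lemma bayes_risk_perturbed_state_le:
  fixes M :: "(complex^'n^'n) measure"
  assumes M: "prob_space M" "sets M = sets borel" "AE \<rho> in M. density_matrix \<rho>"
    and \<psi>: "norm \<psi> = 1" and e: "0 \<le> e" "e < 1" and W: "W \<in> sets M"
    and c: "0 \<le> c" "\<And>\<rho>. \<rho> \<in> W \<Longrightarrow> c \<le> Re (schur_compl \<rho> \<psi> $ i $ i)"
  shows "bayes_risk M (perturbed_state e \<psi> i) \<le> bayes_risk M (outer \<psi> \<psi>) + e - sqrt (e * c) * measure M W"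
proof -
  interpret prob_space M
    by (rule M(1))
  define f0 f1 where "f0 = (\<lambda>\<rho>. infidelity \<rho> (outer \<psi> \<psi>))"
    and "f1 = (\<lambda>\<rho>. infidelity \<rho> (perturbed_state e \<psi> i))"
  have int0: "integrable M f0"
    using integrable_infidelity_rank2[OF M, of \<psi> 0] \<psi> by (simp add: f0_def)
  have int1: "integrable M f1"
    using integrable_infidelity_rank2[OF M, of "sqrt (1 - e) *\<^sub>R \<psi>" "sqrt e *\<^sub>R axis i 1"] \<psi> e
    by (simp add: f1_def perturbed_state_eq_rank2 norm_axis_one)
  have intW: "integrable M (indicator W :: _ \<Rightarrow> real)"
    using W by (simp add: less_top[symmetric])
  have "AE \<rho> in M. f1 \<rho> \<le> f0 \<rho> + e - sqrt (e * c) * indicator W \<rho>"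
    using M(3)
  proof eventually_elim
    fix \<rho> :: "complex^'n^'n"
    assume \<rho>: "density_matrix \<rho>"
    have "sqrt (e * c) * indicator W \<rho> \<le> sqrt (e * Re (schur_compl \<rho> \<psi> $ i $ i))"
      using c(2)[of \<rho>] psd_diag(2)[OF psd_schur_compl, of \<rho> \<psi> i] \<rho> e(1)
      by (auto simp: indicator_def density_matrix_def intro!: mult_left_mono)
    then show "f1 \<rho> \<le> f0 \<rho> + e - sqrt (e * c) * indicator W \<rho>"
      using infidelity_perturbed_state_le[OF \<rho> \<psi>, of e i] e by (simp add: f0_def f1_def)
  qed
  then have "integral\<^sup>L M f1 \<le> integral\<^sup>L M (\<lambda>\<rho>. f0 \<rho> + e - sqrt (e * c) * indicator W \<rho>)"
    using int0 int1 intW by (intro integral_mono_AE) auto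
  also have "\<dots> = integral\<^sup>L M f0 + e - sqrt (e * c) * measure M W"
    using int0 intW sets.sets_into_space[OF W] by (simp add: prob_space Int_absorb2)
  finally show ?thesis
    by (simp add: bayes_risk_def f0_def f1_def)
qed

lemma bayes_risk_perturbed_state_less:
  fixes M :: "(complex^'n^'n) measure"
  assumes M: "prob_space M" "sets M = sets borel" "AE \<rho> in M. density_matrix \<rho>"
    and \<psi>: "norm \<psi> = 1" and W: "W \<in> sets M" "emeasure M W > 0"
    and c: "0 < c" "c \<le> 1" "\<And>\<rho>. \<rho> \<in> W \<Longrightarrow> c \<le> Re (schur_compl \<rho> \<psi> $ i $ i)"
  obtains e where "density_matrix (perturbed_state e \<psi> i)"
    and "bayes_risk M (perturbed_state e \<psi> i) < bayes_risk M (outer \<psi> \<psi>)"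
proof -
  interpret prob_space M
    by (rule M(1))
  define m where "m = measure M W"
  have m: "0 < m" "m \<le> 1"
    using W by (simp_all add: m_def emeasure_eq_measure)
  define e where "e = (m * sqrt c / 2)^2"
  have "m * sqrt c \<le> 1"
    using m c by (simp add: mult_le_one)
  then have e: "0 < e" "e < 1"
    using m c by (simp_all add: e_def power_less_one_iff)
  have e4: "e = m^2 * c / 4"
    using c by (simp add: e_def power_divide power_mult_distrib)
  then have "e * c = (m * c / 2)^2"
    by (simp add: power2_eq_square)
  then have sqrt_ec: "sqrt (e * c) = m * c / 2"
    using m c by simp
  have "sqrt (e * c) * m = 2 * e"
    unfolding sqrt_ec unfolding e4 by (simp add: power2_eq_square)
  then have "bayes_risk M (perturbed_state e \<psi> i) < bayes_risk M (outer \<psi> \<psi>)"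
    using bayes_risk_perturbed_state_le[OF M \<psi> less_imp_le[OF e(1)] e(2) W(1) less_imp_le[OF c(1)] c(3)] e(1)
    by (simp add: m_def)
  moreover have "density_matrix (perturbed_state e \<psi> i)"
    using \<psi> e by (simp add: density_perturbed_state)
  ultimately show ?thesis
    using that by blast
qed

lemma sets_schur_compl_diag_ge:
  fixes M :: "(complex^'n^'n) measure"
  assumes "sets M = sets borel" and "B \<in> sets M"
  shows "B \<inter> {\<rho>. c \<le> Re (schur_compl \<rho> \<psi> $ i $ i)} \<in> sets M"
  using borel_measurable_schur_compl_diag[of \<psi> i] assms by (simp add: borel_measurable_iff_ge sets.Int)

lemma emeasure_schur_compl_diag_ge_pos:
  fixes M :: "(complex^'n^'n) measure"
  assumes M: "sets M = sets borel" "AE \<rho> in M. density_matrix \<rho>"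
    and B: "B \<in> sets M" "emeasure M B > 0"
    and trace_bound: "\<And>\<rho>. \<rho> \<in> B \<Longrightarrow> density_matrix \<rho> \<Longrightarrow> \<kappa> \<le> Re (trace (schur_compl \<rho> \<psi>))"
  obtains i where "emeasure M (B \<inter> {\<rho>. \<kappa> / CARD('n) \<le> Re (schur_compl \<rho> \<psi> $ i $ i)}) > 0"
proof -
  define W where "W i = B \<inter> {\<rho>. \<kappa> / CARD('n) \<le> Re (schur_compl \<rho> \<psi> $ i $ i)}" for i
  have "W i \<in> sets M" for i
    unfolding W_def by (rule sets_schur_compl_diag_ge[OF M(1) B(1)])
  moreover have "AE \<rho> in M. \<rho> \<in> B \<longrightarrow> (\<exists>i\<in>UNIV. \<rho> \<in> W i)"
    using M(2)
  proof eventually_elim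
    case (elim \<rho>)
    show ?case
    proof
      assume "\<rho> \<in> B"
      obtain i where "Re (trace (schur_compl \<rho> \<psi>)) / CARD('n) \<le> Re (schur_compl \<rho> \<psi> $ i $ i)"
        by (rule exists_Re_diag_ge_average)
      moreover have "\<kappa> / CARD('n) \<le> Re (trace (schur_compl \<rho> \<psi>)) / CARD('n)"
        using trace_bound[OF \<open>\<rho> \<in> B\<close> elim] by (rule divide_right_mono) simp
      ultimately have "\<kappa> / CARD('n) \<le> Re (schur_compl \<rho> \<psi> $ i $ i)"
        by linarith
      then show "\<exists>i\<in>UNIV. \<rho> \<in> W i"
        using \<open>\<rho> \<in> B\<close> by (auto simp: W_def)
    qed
  qed
  ultimately show ?thesis
    using AE_finite_cover_emeasure_pos[of UNIV W M B] B that by (auto simp: W_def)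
qed

theorem lemma2:
  fixes M :: "(complex^'n^'n) measure"
  assumes "prob_space M"
    and "sets M = sets borel"
    and "AE \<rho> in M. density_matrix \<rho>"
    and "\<exists>\<rho>\<in>measure_support M. mixed_state \<rho>"
  shows "\<not> (\<exists>\<sigma>. pure_state \<sigma> \<and> bayes_estimator M \<sigma>)"
proof
  assume "\<exists>\<sigma>. pure_state \<sigma> \<and> bayes_estimator M \<sigma>"
  then obtain \<sigma> where \<sigma>: "pure_state \<sigma>" "bayes_estimator M \<sigma>"
    by blast
  obtain \<psi> where \<sigma>_eq: "\<sigma> = outer \<psi> \<psi>" and \<psi>: "norm \<psi> = 1"
    using pure_state_eq_outer[OF \<sigma>(1)] by blast
  obtain \<rho>\<^sub>0 where supp: "\<rho>\<^sub>0 \<in> measure_support M" and mixed: "mixed_state \<rho>\<^sub>0"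
    using assms(4) by blast
  obtain r \<kappa> where r: "0 < r" and \<kappa>: "0 < \<kappa>" "\<kappa> \<le> 1"
    and trace_bound: "\<And>\<rho> \<psi>. \<rho> \<in> ball \<rho>\<^sub>0 r \<Longrightarrow> density_matrix \<rho> \<Longrightarrow> \<kappa> \<le> Re (trace (schur_compl \<rho> \<psi>))"
    using mixed_state_schur_compl_trace_bound[OF mixed] by blast
  have ball: "ball \<rho>\<^sub>0 r \<in> sets M" "emeasure M (ball \<rho>\<^sub>0 r) > 0"
    using assms(2) supp r by (simp_all add: measure_support_def)
  define c where "c = \<kappa> / CARD('n)"
  obtain i where "emeasure M (ball \<rho>\<^sub>0 r \<inter> {\<rho>. c \<le> Re (schur_compl \<rho> \<psi> $ i $ i)}) > 0"
    unfolding c_def by (rule emeasure_schur_compl_diag_ge_pos[OF assms(2,3) ball trace_bound])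
  moreover have "ball \<rho>\<^sub>0 r \<inter> {\<rho>. c \<le> Re (schur_compl \<rho> \<psi> $ i $ i)} \<in> sets M"
    by (rule sets_schur_compl_diag_ge[OF assms(2) ball(1)])
  moreover have "0 < c" "c \<le> 1"
    using \<kappa> by (simp_all add: c_def divide_le_eq order_trans[OF \<kappa>(2)])
  ultimately obtain e where "density_matrix (perturbed_state e \<psi> i)"
    and "bayes_risk M (perturbed_state e \<psi> i) < bayes_risk M (outer \<psi> \<psi>)"
    using bayes_risk_perturbed_state_less[OF assms(1-3) \<psi>] by blast
  with \<sigma>(2) show False
    by (auto simp: bayes_estimator_def \<sigma>_eq not_le)
qed

end
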